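(* Let $n\ge1$ and let $\mathcal S_n\subset\{0,1\}^{n\times n}$ be the set of adjacency matrices of simple graphs on $n$ nodes. (i) For every directed multigraph with output pair $H=(V,E,(a,b))$ with $a\ne b$ and $|E|\le4$, and every $\varepsilon>0$, there is a PPGN++ network $F$ with $\max_{X\in\mathcal S_n}\max_{i,j}|F(X)_{ij}-P_H(X)_{ij}|<\varepsilon$. (ii) For every such $H$ with $a=b$ and $|E|\le5$, and every $\varepsilon>0$, there is a PPGN++ network $F$ with $\max_{X\in\mathcal S_n}\max_{i}|F(X)_{ii}-P_H(X)_{ii}|<\varepsilon$. (iii) For every such $H$ with $a=b$ and $|E|\le2$, and every $\varepsilon>0$, there is an MPNN $F$ with $\max_{X\in\mathcal S_n}\max_i|F(X)_i-P_H(X)_{ii}|<\varepsilon$. (In the paper's terminology: PPGN++ is at least 4 edge polynomial expressive and 5 node polynomial expressive, and MPNN is at least 2 node polynomial expressive.)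
   Context: A directed multigraph with output pair is $H=(V,E,(a,b))$ with $V=[m]$, $E$ a multiset of ordered pairs (loops and parallel edges allowed), $a,b\in V$ not necessarily distinct (red edge, not in $E$). $P_H(X)_{i_a,i_b}=\sum_{j\in[n]^m,\,j_a=i_a,\,j_b=i_b}\prod_{(r,s)\in E}X_{j_r,j_s}$ (with multiplicity, empty product $=1$), off-diagonal entries $0$ if $a=b$. A simple graph adjacency matrix is symmetric, 0/1, with zero diagonal. MLPs are finite-width feedforward networks with a continuous non-polynomial activation. MPNN: $Y^{(0)}=\mathbf 1\in\mathbb R^{n\times1}$, $Y^{(k+1)}=\mathtt m_k([XY^{(k)},\mathbf 1\mathbf 1^TY^{(k)},Y^{(k)}])$, brackets denoting concatenation along features and $\mathtt m_k$ an MLP applied to each row; output $F(X)\in\mathbb R^n$ is one feature column of the last layer. PPGN++: $Z^{(0)}=X\in\mathbb R^{n\times n\times1}$, $Z^{(k+1)}=\bar{\mathtt m}_3([\bar{\mathtt m}_1([Z^{(k)},Z^{(k)T}])\circledast\bar{\mathtt m}_2(Z^{(k)}),Z^{(k)}])$, with $Z^T$ transposing node indices channelwise, $\circledast$ channelwise matrix multiplication, and each $\bar{\mathtt m}_i$ a pair of MLPs, one applied to the feature vectors of diagonal entries and one to those of off-diagonal entries; output $F(X)\in\mathbb R^{n\times n}$ is one feature channel of the last layer. *)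

theory Defs
  imports Complex_Main "HOL-Library.Multiset" "HOL-Library.FuncSet" "HOL-Computational_Algebra.Polynomial"
begin

(* Vectors of dimension d are functions nat => real, only indices < d matter.
   Nodes are 0..<n, vertices of H are 0..<m. *)

definition non_polynomial :: "(real \<Rightarrow> real) \<Rightarrow> bool" where
  "non_polynomial \<sigma> \<longleftrightarrow> \<not> (\<exists>p :: real poly. \<forall>x. \<sigma> x = poly p x)"

definition is_affine :: "nat \<Rightarrow> nat \<Rightarrow> ((nat \<Rightarrow> real) \<Rightarrow> (nat \<Rightarrow> real)) \<Rightarrow> bool" where
  "is_affine d e f \<longleftrightarrow> (\<exists>W c. \<forall>x. f x = (\<lambda>i. if i < e then (\<Sum>j<d. W i j * x j) + c i else 0))"

inductive mlp :: "(real \<Rightarrow> real) \<Rightarrow> nat \<Rightarrow> nat \<Rightarrow> ((nat \<Rightarrow> real) \<Rightarrow> (nat \<Rightarrow> real)) \<Rightarrow> bool"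
  for \<sigma> where
  mlp_affine: "is_affine d e f \<Longrightarrow> mlp \<sigma> d e f"
| mlp_layer: "is_affine d h g \<Longrightarrow> mlp \<sigma> h e f \<Longrightarrow> mlp \<sigma> d e (\<lambda>x. f (\<lambda>i. \<sigma> (g x i)))"

(* Homomorphism polynomial P_H(X)_{i,j} of H = ({0..<m}, E, (a,b)) on n-node matrices *)
definition hom_poly :: "nat \<Rightarrow> nat \<Rightarrow> (nat \<times> nat) multiset \<Rightarrow> nat \<Rightarrow> nat
    \<Rightarrow> (nat \<Rightarrow> nat \<Rightarrow> real) \<Rightarrow> nat \<Rightarrow> nat \<Rightarrow> real" where
  "hom_poly n m E a b X i j =
     (if a = b \<and> i \<noteq> j then 0 else
       (\<Sum>\<phi> \<in> {\<phi> \<in> PiE {..<m} (\<lambda>_. {..<n}). \<phi> a = i \<and> \<phi> b = j}.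
          prod_mset (image_mset (\<lambda>e. X (\<phi> (fst e)) (\<phi> (snd e))) E)))"

definition is_multigraph_output :: "nat \<Rightarrow> (nat \<times> nat) multiset \<Rightarrow> nat \<Rightarrow> nat \<Rightarrow> bool" where
  "is_multigraph_output m E a b \<longleftrightarrow> a < m \<and> b < m \<and> set_mset E \<subseteq> {..<m} \<times> {..<m}"

definition simple_adj :: "nat \<Rightarrow> (nat \<Rightarrow> nat \<Rightarrow> real) set" where
  "simple_adj n = {X. (\<forall>i j. i < n \<and> j < n \<longrightarrow> X i j \<in> {0, 1} \<and> X i j = X j i)
                     \<and> (\<forall>i. X i i = 0)
                     \<and> (\<forall>i j. \<not> (i < n \<and> j < n) \<longrightarrow> X i j = 0)}"

definition mpnn_concat :: "nat \<Rightarrow> nat \<Rightarrow> (nat \<Rightarrow> nat \<Rightarrow> real) \<Rightarrow> (nat \<Rightarrow> nat \<Rightarrow> real)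
    \<Rightarrow> nat \<Rightarrow> (nat \<Rightarrow> real)" where
  "mpnn_concat n d X Y i = (\<lambda>c. if c < d then (\<Sum>j<n. X i j * Y j c)
       else if c < 2 * d then (\<Sum>j<n. Y j (c - d))
       else Y i (c - 2 * d))"

(* mpnn_layers \<sigma> n d Y : Y maps X to the current feature matrix (node i, feature c), d features *)
inductive mpnn_layers :: "(real \<Rightarrow> real) \<Rightarrow> nat \<Rightarrow> nat
    \<Rightarrow> ((nat \<Rightarrow> nat \<Rightarrow> real) \<Rightarrow> (nat \<Rightarrow> nat \<Rightarrow> real)) \<Rightarrow> bool" for \<sigma> n where
  mpnn_init: "mpnn_layers \<sigma> n 1 (\<lambda>X i c. if c = 0 then 1 else 0)"
| mpnn_step: "mpnn_layers \<sigma> n d Y \<Longrightarrow> mlp \<sigma> (3 * d) d' m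
     \<Longrightarrow> mpnn_layers \<sigma> n d' (\<lambda>X i. m (mpnn_concat n d X (Y X) i))"

definition mpnn :: "(real \<Rightarrow> real) \<Rightarrow> nat \<Rightarrow> ((nat \<Rightarrow> nat \<Rightarrow> real) \<Rightarrow> nat \<Rightarrow> real) \<Rightarrow> bool" where
  "mpnn \<sigma> n F \<longleftrightarrow> (\<exists>d Y c. mpnn_layers \<sigma> n d Y \<and> c < d \<and> F = (\<lambda>X i. Y X i c))"

(* tensors Z i j c : node pair (i,j), channel c *)
definition pair_apply :: "((nat \<Rightarrow> real) \<Rightarrow> (nat \<Rightarrow> real)) \<Rightarrow> ((nat \<Rightarrow> real) \<Rightarrow> (nat \<Rightarrow> real))
    \<Rightarrow> (nat \<Rightarrow> nat \<Rightarrow> nat \<Rightarrow> real) \<Rightarrow> (nat \<Rightarrow> nat \<Rightarrow> nat \<Rightarrow> real)" where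
  "pair_apply md mo Z = (\<lambda>i j. if i = j then md (Z i j) else mo (Z i j))"

definition concat_ch :: "nat \<Rightarrow> (nat \<Rightarrow> nat \<Rightarrow> nat \<Rightarrow> real) \<Rightarrow> (nat \<Rightarrow> nat \<Rightarrow> nat \<Rightarrow> real)
    \<Rightarrow> (nat \<Rightarrow> nat \<Rightarrow> nat \<Rightarrow> real)" where
  "concat_ch d A B = (\<lambda>i j c. if c < d then A i j c else B i j (c - d))"

definition transp_ch :: "(nat \<Rightarrow> nat \<Rightarrow> nat \<Rightarrow> real) \<Rightarrow> (nat \<Rightarrow> nat \<Rightarrow> nat \<Rightarrow> real)" where
  "transp_ch Z = (\<lambda>i j c. Z j i c)"

definition chmatmul :: "nat \<Rightarrow> (nat \<Rightarrow> nat \<Rightarrow> nat \<Rightarrow> real) \<Rightarrow> (nat \<Rightarrow> nat \<Rightarrow> nat \<Rightarrow> real)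
    \<Rightarrow> (nat \<Rightarrow> nat \<Rightarrow> nat \<Rightarrow> real)" where
  "chmatmul n A B = (\<lambda>i j c. \<Sum>k<n. A i k c * B k j c)"

inductive ppgn_layers :: "(real \<Rightarrow> real) \<Rightarrow> nat \<Rightarrow> nat
    \<Rightarrow> ((nat \<Rightarrow> nat \<Rightarrow> real) \<Rightarrow> (nat \<Rightarrow> nat \<Rightarrow> nat \<Rightarrow> real)) \<Rightarrow> bool" for \<sigma> n where
  ppgn_init: "ppgn_layers \<sigma> n 1 (\<lambda>X i j c. if c = 0 then X i j else 0)"
| ppgn_step: "ppgn_layers \<sigma> n d Z
     \<Longrightarrow> mlp \<sigma> (2 * d) e m1d \<Longrightarrow> mlp \<sigma> (2 * d) e m1o
     \<Longrightarrow> mlp \<sigma> d e m2d \<Longrightarrow> mlp \<sigma> d e m2o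
     \<Longrightarrow> mlp \<sigma> (e + d) d' m3d \<Longrightarrow> mlp \<sigma> (e + d) d' m3o
     \<Longrightarrow> ppgn_layers \<sigma> n d' (\<lambda>X. pair_apply m3d m3o
            (concat_ch e (chmatmul n (pair_apply m1d m1o (concat_ch d (Z X) (transp_ch (Z X))))
                                     (pair_apply m2d m2o (Z X)))
                         (Z X)))"

definition ppgn :: "(real \<Rightarrow> real) \<Rightarrow> nat \<Rightarrow> ((nat \<Rightarrow> nat \<Rightarrow> real) \<Rightarrow> nat \<Rightarrow> nat \<Rightarrow> real) \<Rightarrow> bool" where
  "ppgn \<sigma> n F \<longleftrightarrow> (\<exists>d Z c. ppgn_layers \<sigma> n d Z \<and> c < d \<and> F = (\<lambda>X i j. Z X i j c))"

end

(* On the finite set of simple graphs approximation can be replaced by exact computation.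
   One-hidden-layer MLPs with a continuous non-polynomial activation interpolate arbitrary
   finite data: if the ridge functions sigma (a t + b) could not separate finitely many points,
   sigma would satisfy a nontrivial relation sum_p mu_p sigma (a p + b) = 0 for all a, b, and
   repeated local averaging, differentiation in a and Lagrange interpolation show that sigma is
   then a polynomial.  Hence a network whose MLPs are replaced by arbitrary functions is
   realised exactly, and it suffices to compute P_H with such idealised networks.

   This is done by eliminating the non-output vertices one at a time.  For PPGN++, a vertex v
   lying on at most two vertex pairs {v, u}, {v, w} is summed out by one channelwise matrix
   product, which leaves a single edge (u, w) labelled by that product.  Counting degrees shows
   that such a vertex exists when at most 4 (a <> b) or 5 (a = b) pairs are present, and
   eliminations never increase the number of pairs.  For MPNN, with at most 2 pairs some
   non-output vertex is isolated or a leaf and is absorbed into the node label of its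
   neighbour by a neighbourhood sum; on simple graphs parallel edges and loops collapse. *)

theory Submission
  imports Defs "HOL-Analysis.Analysis"
begin

section \<open>Continuous functions satisfying a linear relation are polynomials\<close>

lemma exists_antiderivative:
  fixes g :: "real \<Rightarrow> real"
  assumes "continuous_on UNIV g"
  shows "\<exists>G. \<forall>x. (G has_real_derivative g x) (at x)"
proof -
  have "\<exists>F. \<forall>x :: real. -\<infinity> < ereal x \<longrightarrow> ereal x < \<infinity> \<longrightarrow> (F has_vector_derivative g x) (at x)"
    by (rule einterval_antiderivative) (use assms in \<open>auto simp: continuous_on_eq_continuous_at\<close>)
  then show ?thesis by (auto simp: has_real_derivative_iff_has_vector_derivative)
qed

definition antiderivative :: "(real \<Rightarrow> real) \<Rightarrow> real \<Rightarrow> real" where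
  "antiderivative g = (SOME G. \<forall>x. (G has_real_derivative g x) (at x))"

lemma antiderivative_has_derivative:
  "continuous_on UNIV g \<Longrightarrow> (antiderivative g has_real_derivative g x) (at x)"
  unfolding antiderivative_def by (rule someI_ex[OF exists_antiderivative, rule_format])

lemma has_derivative_shift:
  "(\<And>x. (G has_real_derivative g x) (at x)) \<Longrightarrow> ((\<lambda>x. G (x + c)) has_real_derivative g (x + c)) (at x)"
  using DERIV_shift[of G "g (x + c)" x c] by (simp add: add.commute)

definition local_mean :: "real \<Rightarrow> (real \<Rightarrow> real) \<Rightarrow> real \<Rightarrow> real" where
  "local_mean h g x = (antiderivative g (x + h) - antiderivative g x) / h"

definition forward_diff :: "real \<Rightarrow> (real \<Rightarrow> real) \<Rightarrow> real \<Rightarrow> real" where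
  "forward_diff h g x = (g (x + h) - g x) / h"

lemma local_mean_has_derivative:
  assumes "continuous_on UNIV g"
  shows "(local_mean h g has_real_derivative forward_diff h g x) (at x)"
  unfolding local_mean_def[abs_def] forward_diff_def
  by (intro DERIV_cdivide DERIV_diff has_derivative_shift antiderivative_has_derivative assms)

lemma continuous_on_local_mean_iterate:
  "continuous_on UNIV g \<Longrightarrow> continuous_on UNIV ((local_mean h ^^ j) g)"
  by (induction j) (auto intro: DERIV_isCont continuous_at_imp_continuous_on local_mean_has_derivative)

lemma local_mean_keeps_relation:
  assumes "continuous_on UNIV g" and rel: "\<forall>b. (\<Sum>p\<in>P. \<mu> p * g (a * p + b)) = 0"
  shows "(\<Sum>p\<in>P. \<mu> p * local_mean h g (a * p + b)) = 0"
proof -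
  define G where "G = antiderivative g"
  define H where "H = (\<lambda>b. \<Sum>p\<in>P. \<mu> p * G (a * p + b))"
  have "(H has_real_derivative (\<Sum>p\<in>P. \<mu> p * g (b + a * p))) (at b)" for b
    unfolding H_def G_def using antiderivative_has_derivative[OF assms(1)]
    by (intro DERIV_sum DERIV_cmult) (simp add: add.commute has_derivative_shift)
  then have "(H has_real_derivative 0) (at b)" for b using rel by (simp add: add.commute)
  then have "H (b + h) = H b" by (meson DERIV_isconst_all)
  moreover have "(\<Sum>p\<in>P. \<mu> p * local_mean h g (a * p + b)) = (H (b + h) - H b) / h"
    unfolding local_mean_def H_def G_def
    by (simp add: sum_divide_distrib[symmetric] sum_subtractf[symmetric] algebra_simps)
  ultimately show ?thesis by simp
qed

lemma local_mean_iterate_keeps_relation: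
  assumes "continuous_on UNIV g" "\<forall>a b. (\<Sum>p\<in>P. \<mu> p * g (a * p + b)) = 0"
  shows "\<forall>a b. (\<Sum>p\<in>P. \<mu> p * (local_mean h ^^ j) g (a * p + b)) = 0"
  by (induction j)
    (use assms local_mean_keeps_relation[OF continuous_on_local_mean_iterate[OF assms(1)]] in auto)

lemma local_mean_near:
  assumes "continuous_on UNIV g" "h > 0" and near: "\<forall>y\<in>{x..x+r+h}. \<bar>g y - c\<bar> \<le> \<epsilon>"
    and y: "y \<in> {x..x+r}"
  shows "\<bar>local_mean h g y - c\<bar> \<le> \<epsilon>"
proof -
  obtain z where z: "y < z" "z < y + h" "antiderivative g (y + h) - antiderivative g y = (y + h - y) * g z"
    using MVT2[of y "y + h" "antiderivative g" g] antiderivative_has_derivative[OF assms(1)] \<open>h > 0\<close>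
    by auto
  then have "local_mean h g y = g z" unfolding local_mean_def using \<open>h > 0\<close> by simp
  moreover have "z \<in> {x..x+r+h}" using z y by auto
  ultimately show ?thesis using near by auto
qed

lemma local_mean_iterate_near:
  assumes cont: "continuous_on UNIV g" and h: "h > 0"
    and near: "\<forall>y\<in>{x..x + real K * h}. \<bar>g y - g x\<bar> \<le> \<epsilon>"
  shows "\<bar>(local_mean h ^^ K) g x - g x\<bar> \<le> \<epsilon>"
proof -
  have "j \<le> K \<Longrightarrow> \<forall>y\<in>{x..x + real (K - j) * h}. \<bar>(local_mean h ^^ j) g y - g x\<bar> \<le> \<epsilon>" for j
  proof (induction j)
    case 0 then show ?case using near by simp
  next
    case (Suc j)
    have "x + real (K - Suc j) * h + h = x + real (K - j) * h"
      using Suc(2) by (simp add: of_nat_diff algebra_simps)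
    then show ?case
      using Suc local_mean_near[OF continuous_on_local_mean_iterate[OF cont, where h = h and j = j] h,
          of x "real (K - Suc j) * h" "g x" \<epsilon>] by simp
  qed
  from this[of K] show ?thesis by simp
qed

lemma local_mean_iterate_tendsto:
  assumes cont: "continuous_on UNIV g"
  shows "(\<lambda>r. (local_mean (1 / real (Suc r)) ^^ K) g y) \<longlonglongrightarrow> g y"
proof (rule LIMSEQ_I)
  fix e :: real assume e: "e > 0"
  then obtain d where d: "d > 0" "\<forall>y'. dist y' y < d \<longrightarrow> dist (g y') (g y) < e / 2"
    using cont unfolding continuous_on_iff by (metis UNIV_I half_gt_zero)
  obtain N where N: "real K / d < real N" using reals_Archimedean2 by blast
  show "\<exists>no. \<forall>r\<ge>no. norm ((local_mean (1 / real (Suc r)) ^^ K) g y - g y) < e"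
  proof (intro exI allI impI)
    fix r assume r: "N \<le> r"
    have "real K < d * real (Suc r)"
      using N d r by (simp add: field_simps) (smt (verit) mult_left_mono of_nat_mono)
    then have "real K * (1 / real (Suc r)) < d" by (simp add: field_simps)
    then have "\<forall>y'\<in>{y..y + real K * (1 / real (Suc r))}. \<bar>g y' - g y\<bar> \<le> e / 2"
      using d(2) by (auto simp: dist_real_def less_imp_le)
    from local_mean_iterate_near[OF cont _ this] e
    show "norm ((local_mean (1 / real (Suc r)) ^^ K) g y - g y) < e" by simp
  qed
qed

lemma forward_diff_iterate_has_derivative:
  assumes "\<And>y. (f has_real_derivative f' y) (at y)"
  shows "((forward_diff h ^^ k) f has_real_derivative (forward_diff h ^^ k) f' x) (at x)"
proof (induction k arbitrary: x)
  case 0 then show ?case using assms by simp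
next
  case (Suc k)
  then show ?case
    unfolding funpow.simps o_apply forward_diff_def[of h "(forward_diff h ^^ k) f"]
      forward_diff_def[of h "(forward_diff h ^^ k) f'"]
    by (intro DERIV_cdivide DERIV_diff has_derivative_shift) auto
qed

lemma moment_nonzero:
  fixes \<mu> :: "real \<Rightarrow> real"
  assumes "finite P" "p0 \<in> P" "\<mu> p0 \<noteq> 0"
  shows "\<exists>k<card P. (\<Sum>p\<in>P. \<mu> p * p ^ k) \<noteq> 0"
proof (rule ccontr)
  assume A: "\<not> ?thesis"
  define q where "q = (\<Prod>p'\<in>P-{p0}. [:-p', 1:])"
  have "degree q \<le> sum (degree \<circ> (\<lambda>p'. [:-p', 1:])) (P-{p0})"
    unfolding q_def by (rule degree_prod_sum_le) (use assms in auto)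
  also have "\<dots> = card (P - {p0})" by simp
  finally have dq: "degree q < card P" using assms by (metis card_Diff1_less le_less_trans)
  have pq: "poly q p = (\<Prod>p'\<in>P-{p0}. p - p')" for p unfolding q_def poly_prod by simp
  have "(\<Sum>p\<in>P-{p0}. \<mu> p * poly q p) = 0"
    by (intro sum.neutral) (use assms in \<open>auto simp: pq prod_zero_iff\<close>)
  then have "(\<Sum>p\<in>P. \<mu> p * poly q p) = \<mu> p0 * poly q p0"
    using assms by (simp add: sum.remove)
  moreover have "poly q p0 \<noteq> 0" unfolding pq using assms by (subst prod_zero_iff) auto
  moreover have "(\<Sum>p\<in>P. \<mu> p * poly q p) = (\<Sum>p\<in>P. \<Sum>i\<le>degree q. \<mu> p * (coeff q i * p ^ i))"
    unfolding poly_altdef by (simp add: sum_distrib_left)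
  moreover have "\<dots> = (\<Sum>i\<le>degree q. coeff q i * (\<Sum>p\<in>P. \<mu> p * p ^ i))"
    by (subst sum.swap) (simp add: sum_distrib_left algebra_simps)
  moreover have "\<dots> = 0" by (rule sum.neutral) (use A dq in auto)
  ultimately show False using assms by simp
qed

lemma relation_derivative_step:
  assumes deriv: "\<And>x. (f has_real_derivative f' x) (at x)"
    and rel: "\<forall>a b. (\<Sum>p\<in>P. \<mu> p * p ^ k * f (a * p + b)) = 0"
  shows "(\<Sum>p\<in>P. \<mu> p * p ^ Suc k * f' (a * p + b)) = 0"
proof -
  have "((\<lambda>a. \<Sum>p\<in>P. \<mu> p * p ^ k * f (a * p + b)) has_real_derivative
          (\<Sum>p\<in>P. \<mu> p * p ^ k * (f' (a * p + b) * p))) (at a)"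
    by (intro DERIV_sum DERIV_cmult DERIV_chain2[OF deriv]) (auto intro!: derivative_eq_intros)
  moreover have "(\<lambda>a. \<Sum>p\<in>P. \<mu> p * p ^ k * f (a * p + b)) = (\<lambda>a. 0)" using rel by auto
  ultimately have "((\<lambda>a. 0) has_real_derivative (\<Sum>p\<in>P. \<mu> p * p ^ k * (f' (a * p + b) * p))) (at a)"
    by simp
  then have "(\<Sum>p\<in>P. \<mu> p * p ^ k * (f' (a * p + b) * p)) = 0"
    using DERIV_unique DERIV_const by blast
  then show ?thesis by (simp add: algebra_simps)
qed

lemma derivative_chain_vanishing_imp_poly:
  assumes chain: "\<And>m x. m < k \<Longrightarrow> (f m has_real_derivative f (Suc m) x) (at x)"
    and vanish: "\<And>x. f k x = 0"
  shows "\<exists>q. (\<forall>i\<ge>k. coeff q i = 0) \<and> (\<forall>x. f 0 x = poly q x)"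
proof -
  define d where "d m = (if m \<le> k then f m else (\<lambda>x. 0))" for m
  have "f k = (\<lambda>x. 0)" using vanish by auto
  then have "\<forall>m x. (d m has_real_derivative d (Suc m) x) (at x)"
    unfolding d_def using chain by (auto simp: not_less_eq_eq)
  moreover have "d 0 = f 0" unfolding d_def by simp
  ultimately have "\<exists>t. f 0 x = (\<Sum>m<k. d m 0 / fact m * x ^ m) + d k t / fact k * x ^ k" for x
    using Maclaurin_all_le by blast
  then have "f 0 x = poly (\<Sum>m<k. monom (d m 0 / fact m) m) x" for x
    using vanish by (auto simp: poly_sum poly_monom d_def)
  moreover have "\<forall>i\<ge>k. coeff (\<Sum>m<k. monom (d m 0 / fact m) m) i = 0"
    by (auto simp: coeff_sum coeff_monom)
  ultimately show ?thesis by blast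
qed

text \<open>Differentiating the relation \<open>k\<close> times in \<open>a\<close> and putting \<open>a = 0\<close> isolates the \<open>k\<close>-th
  moment of \<open>\<mu>\<close>, and one of the first \<open>card P\<close> moments is nonzero.\<close>

lemma local_mean_iterate_poly:
  fixes g :: "real \<Rightarrow> real"
  assumes cont: "continuous_on UNIV g" and fin: "finite P" and p0: "p0 \<in> P" "\<mu> p0 \<noteq> 0"
    and rel: "\<forall>a b. (\<Sum>p\<in>P. \<mu> p * g (a * p + b)) = 0"
  shows "\<exists>q. degree q < card P \<and> (\<forall>x. (local_mean h ^^ card P) g x = poly q x)"
proof -
  define K where "K = card P"
  have K: "K \<ge> 1" using fin p0 unfolding K_def by (metis One_nat_def Suc_leI card_gt_0_iff empty_iff)
  define df where "df k = (forward_diff h ^^ k) ((local_mean h ^^ (K - k)) g)" for k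
  have chain: "(df k has_real_derivative df (Suc k) x) (at x)" if "k < K" for k x
  proof -
    have "(local_mean h ^^ (K - k)) g = local_mean h ((local_mean h ^^ (K - Suc k)) g)"
      using that by (metis Suc_diff_Suc funpow.simps(2) o_apply)
    then show ?thesis
      unfolding df_def using local_mean_has_derivative[OF continuous_on_local_mean_iterate[OF cont]]
      by (simp add: funpow_Suc_right forward_diff_iterate_has_derivative del: funpow.simps)
  qed
  have rel_k: "\<forall>a b. (\<Sum>p\<in>P. \<mu> p * p ^ k * df k (a * p + b)) = 0" if "k \<le> K" for k
    using that
  proof (induction k)
    case 0 then show ?case using local_mean_iterate_keeps_relation[OF cont rel] by (simp add: df_def)
  next
    case (Suc k)
    then show ?case using relation_derivative_step[OF chain] by simp
  qed
  obtain k where k: "k < K" "(\<Sum>p\<in>P. \<mu> p * p ^ k) \<noteq> 0"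
    using moment_nonzero[OF fin p0(1), of \<mu>] p0(2) unfolding K_def by blast
  have "(\<Sum>p\<in>P. \<mu> p * p ^ k * df k (0 * p + x)) = 0" for x
    using rel_k[OF less_imp_le[OF k(1)]] by blast
  then have "(\<Sum>p\<in>P. \<mu> p * p ^ k) * df k x = 0" for x by (simp add: sum_distrib_right)
  then have "df k x = 0" for x using k by simp
  then obtain q where q: "\<forall>i\<ge>k. coeff q i = 0" "\<forall>x. df 0 x = poly q x"
    using derivative_chain_vanishing_imp_poly[of k df] chain k by force
  have "degree q < K" using q(1) k K by (metis degree_le le_trans less_imp_le_nat not_le order_refl)
  then show ?thesis using q(2) unfolding K_def df_def by auto
qed

lemma poly_lagrange_interpolation:
  fixes q :: "real poly"
  assumes "degree q < K"
  shows "poly q x = (\<Sum>i<K. poly q (real i) *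
           ((\<Prod>j\<in>{..<K}-{i}. (x - real j)) / (\<Prod>j\<in>{..<K}-{i}. (real i - real j))))"
proof -
  define L where "L i = smult (1 / (\<Prod>j\<in>{..<K}-{i}. (real i - real j))) (\<Prod>j\<in>{..<K}-{i}. [:-real j, 1:])" for i
  define r where "r = (\<Sum>i<K. smult (poly q (real i)) (L i))"
  have pL: "poly (L i) x = (\<Prod>j\<in>{..<K}-{i}. (x - real j)) / (\<Prod>j\<in>{..<K}-{i}. (real i - real j))" for i x
    unfolding L_def by (simp add: poly_prod)
  have dL: "degree (L i) \<le> K - 1" if "i < K" for i
  proof -
    have "degree (L i) \<le> degree (\<Prod>j\<in>{..<K}-{i}. [:-real j, 1:])" unfolding L_def by (rule degree_smult_le)
    also have "\<dots> \<le> sum (degree \<circ> (\<lambda>j. [:-real j, 1:])) ({..<K}-{i})" by (rule degree_prod_sum_le) auto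
    finally show ?thesis using that by simp
  qed
  have dr: "degree r \<le> K - 1" unfolding r_def
    by (intro degree_sum_le order.trans[OF degree_smult_le]) (use dL in auto)
  have ev: "poly (L i) (real l) = (if l = i then 1 else 0)" if "i < K" "l < K" for i l
    using that unfolding pL by (auto simp: prod_zero_iff)
  have "q = r"
  proof (rule poly_eqI_degree[where A = "real ` {..<K}"])
    fix y assume "y \<in> real ` {..<K}"
    then obtain l where l: "l < K" "y = real l" by auto
    have "poly r y = (\<Sum>i<K. poly q (real i) * poly (L i) (real l))"
      unfolding r_def l by (simp add: poly_sum)
    also have "\<dots> = (\<Sum>i<K. if i = l then poly q (real l) else 0)"
      by (rule sum.cong) (use l ev in auto)
    finally show "poly q y = poly r y" using l by simp
  next
    show "degree q < card (real ` {..<K})" "degree r < card (real ` {..<K})"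
      using assms dr by (auto simp: card_image)
  qed
  then have "poly q x = poly r x" by simp
  also have "\<dots> = (\<Sum>i<K. poly q (real i) * poly (L i) x)" unfolding r_def by (simp add: poly_sum)
  finally show ?thesis unfolding pL .
qed

text \<open>The smoothed functions are polynomials of bounded degree, hence determined by their
  values at \<open>0, \<dots>, K - 1\<close>; this Lagrange representation survives the limit.\<close>

lemma relation_imp_polynomial:
  fixes g :: "real \<Rightarrow> real"
  assumes cont: "continuous_on UNIV g" and fin: "finite P" and p0: "p0 \<in> P" "\<mu> p0 \<noteq> 0"
    and rel: "\<forall>a b. (\<Sum>p\<in>P. \<mu> p * g (a * p + b)) = 0"
  shows "\<exists>p. \<forall>x. g x = poly p x"
proof -
  define K where "K = card P"
  define L where "L i x = (\<Prod>j\<in>{..<K}-{i}. (x - real j)) / (\<Prod>j\<in>{..<K}-{i}. (real i - real j))" for i x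
  define F where "F r = (local_mean (1 / real (Suc r)) ^^ K) g" for r
  have FL: "F r x = (\<Sum>i<K. F r (real i) * L i x)" for r x
  proof -
    obtain q where q: "degree q < K" "\<forall>x. F r x = poly q x"
      using local_mean_iterate_poly[OF cont fin p0 rel] unfolding F_def K_def by blast
    show ?thesis unfolding q(2)[rule_format] L_def by (rule poly_lagrange_interpolation[OF q(1)])
  qed
  have g_lagrange: "g x = (\<Sum>i<K. g (real i) * L i x)" for x
  proof (rule LIMSEQ_unique)
    show "(\<lambda>r. F r x) \<longlonglongrightarrow> g x" unfolding F_def by (rule local_mean_iterate_tendsto[OF cont])
    have "(\<lambda>r. \<Sum>i<K. F r (real i) * L i x) \<longlonglongrightarrow> (\<Sum>i<K. g (real i) * L i x)"
      unfolding F_def by (intro tendsto_sum tendsto_mult_right local_mean_iterate_tendsto[OF cont])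
    moreover have "(\<lambda>r. \<Sum>i<K. F r (real i) * L i x) = (\<lambda>r. F r x)"
      by (rule ext, rule FL[symmetric])
    ultimately show "(\<lambda>r. F r x) \<longlonglongrightarrow> (\<Sum>i<K. g (real i) * L i x)" by simp
  qed
  define p where "p = (\<Sum>i<K. smult (g (real i) / (\<Prod>j\<in>{..<K}-{i}. (real i - real j)))
                     (\<Prod>j\<in>{..<K}-{i}. [:-real j, 1:]))"
  have "poly p x = (\<Sum>i<K. g (real i) * L i x)" for x
    unfolding p_def L_def by (simp add: poly_sum poly_prod)
  then show ?thesis using g_lagrange by metis
qed

section \<open>Exact interpolation by one-hidden-layer networks\<close>

definition ridge_span_on :: "(real \<Rightarrow> real) \<Rightarrow> (real \<times> real) set \<Rightarrow> (real \<Rightarrow> real) \<Rightarrow> bool" where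
  "ridge_span_on \<sigma> U f \<longleftrightarrow> (\<exists>w c. \<forall>t. f t = c + (\<Sum>u\<in>U. w u * \<sigma> (fst u * t + snd u)))"

definition in_ridge_span :: "(real \<Rightarrow> real) \<Rightarrow> (real \<Rightarrow> real) \<Rightarrow> bool" where
  "in_ridge_span \<sigma> f \<longleftrightarrow> (\<exists>U. finite U \<and> ridge_span_on \<sigma> U f)"

lemma ridge_span_on_mono:
  assumes "ridge_span_on \<sigma> U f" "U \<subseteq> V" "finite V"
  shows "ridge_span_on \<sigma> V f"
proof -
  obtain w c where f: "\<forall>t. f t = c + (\<Sum>u\<in>U. w u * \<sigma> (fst u * t + snd u))"
    using assms(1) unfolding ridge_span_on_def by blast
  have "(\<Sum>u\<in>V. (if u \<in> U then w u else 0) * \<sigma> (fst u * t + snd u)) = (\<Sum>u\<in>U. w u * \<sigma> (fst u * t + snd u))"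
    for t by (rule sum.mono_neutral_cong_right) (use assms(2,3) in auto)
  then have "\<forall>t. f t = c + (\<Sum>u\<in>V. (if u \<in> U then w u else 0) * \<sigma> (fst u * t + snd u))"
    using f by simp
  then show ?thesis unfolding ridge_span_on_def
    by (intro exI[of _ "\<lambda>u. if u \<in> U then w u else 0"] exI[of _ c]) simp
qed

lemma ridge_span_on_add:
  assumes "ridge_span_on \<sigma> U f" "ridge_span_on \<sigma> U g"
  shows "ridge_span_on \<sigma> U (\<lambda>t. f t + g t)"
proof -
  obtain w c w' c' where "\<forall>t. f t = c + (\<Sum>u\<in>U. w u * \<sigma> (fst u * t + snd u))"
    "\<forall>t. g t = c' + (\<Sum>u\<in>U. w' u * \<sigma> (fst u * t + snd u))"
    using assms unfolding ridge_span_on_def by blast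
  then show ?thesis unfolding ridge_span_on_def
    by (intro exI[of _ "\<lambda>u. w u + w' u"] exI[of _ "c + c'"]) (simp add: sum.distrib algebra_simps)
qed

lemma ridge_span_on_scale:
  assumes "ridge_span_on \<sigma> U f"
  shows "ridge_span_on \<sigma> U (\<lambda>t. k * f t)"
proof -
  obtain w c where "\<forall>t. f t = c + (\<Sum>u\<in>U. w u * \<sigma> (fst u * t + snd u))"
    using assms unfolding ridge_span_on_def by blast
  then show ?thesis unfolding ridge_span_on_def
    by (intro exI[of _ "\<lambda>u. k * w u"] exI[of _ "k * c"]) (simp add: sum_distrib_left algebra_simps)
qed

lemma in_ridge_span_add:
  assumes "in_ridge_span \<sigma> f" "in_ridge_span \<sigma> g"
  shows "in_ridge_span \<sigma> (\<lambda>t. f t + g t)"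
proof -
  obtain U V where "finite U" "ridge_span_on \<sigma> U f" "finite V" "ridge_span_on \<sigma> V g"
    using assms unfolding in_ridge_span_def by blast
  then have "ridge_span_on \<sigma> (U \<union> V) f" "ridge_span_on \<sigma> (U \<union> V) g"
    using ridge_span_on_mono[of \<sigma> U f "U \<union> V"] ridge_span_on_mono[of \<sigma> V g "U \<union> V"] by auto
  then have "ridge_span_on \<sigma> (U \<union> V) (\<lambda>t. f t + g t)" by (rule ridge_span_on_add)
  with \<open>finite U\<close> \<open>finite V\<close> show ?thesis unfolding in_ridge_span_def
    by (intro exI[of _ "U \<union> V"]) simp
qed

lemma in_ridge_span_scale: "in_ridge_span \<sigma> f \<Longrightarrow> in_ridge_span \<sigma> (\<lambda>t. k * f t)"
  unfolding in_ridge_span_def using ridge_span_on_scale by blast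

lemma in_ridge_span_const: "in_ridge_span \<sigma> (\<lambda>t. k)"
  unfolding in_ridge_span_def ridge_span_on_def by (intro exI[of _ "{}"]) simp

lemma in_ridge_span_ridge: "in_ridge_span \<sigma> (\<lambda>t. \<sigma> (a * t + b))"
  unfolding in_ridge_span_def ridge_span_on_def
  by (intro exI[of _ "{(a, b)}"] conjI exI[of _ "\<lambda>_. 1"] exI[of _ 0]) simp_all

lemma in_ridge_span_sum:
  "finite S \<Longrightarrow> (\<And>s. s \<in> S \<Longrightarrow> in_ridge_span \<sigma> (F s)) \<Longrightarrow> in_ridge_span \<sigma> (\<lambda>t. \<Sum>s\<in>S. F s t)"
  by (induction S rule: finite_induct) (auto intro: in_ridge_span_const in_ridge_span_add)

text \<open>If the span could not separate \<open>t\<close> from \<open>T\<close>, evaluation at \<open>t\<close> would be a fixed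
  combination of evaluations on \<open>T\<close>; applied to the ridge functions this is a nontrivial
  linear relation for \<open>\<sigma>\<close>, which forces \<open>\<sigma>\<close> to be a polynomial.\<close>

lemma ridge_span_separates_point:
  assumes cont: "continuous_on UNIV \<sigma>" and np: "non_polynomial \<sigma>"
    and T: "finite T" "t \<notin> T" and interp: "\<And>y. \<exists>f. in_ridge_span \<sigma> f \<and> (\<forall>s\<in>T. f s = y s)"
  shows "\<exists>f. in_ridge_span \<sigma> f \<and> (\<forall>s\<in>T. f s = 0) \<and> f t \<noteq> 0"
proof (rule ccontr)
  assume no_sep: "\<not> ?thesis"
  obtain e where e: "\<And>s. in_ridge_span \<sigma> (e s)" "\<And>s s'. s' \<in> T \<Longrightarrow> e s s' = (if s' = s then 1 else 0)"
  proof -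
    have "\<exists>f. in_ridge_span \<sigma> f \<and> (\<forall>s'\<in>T. f s' = (if s' = s then 1 else 0))" for s
      using interp[of "\<lambda>s'. if s' = s then 1 else 0"] by simp
    then show ?thesis using that by metis
  qed
  have eval_t: "f t = (\<Sum>s\<in>T. f s * e s t)" if f: "in_ridge_span \<sigma> f" for f
  proof -
    define h where "h x = f x + (-1) * (\<Sum>s\<in>T. f s * e s x)" for x
    have "in_ridge_span \<sigma> h" unfolding h_def
      by (intro in_ridge_span_add in_ridge_span_scale f in_ridge_span_sum T e)
    moreover have "h s' = 0" if s': "s' \<in> T" for s'
    proof -
      have "(\<Sum>s\<in>T. f s * e s s') = (\<Sum>s\<in>T. if s = s' then f s' else 0)"
        by (rule sum.cong) (use e s' in auto)
      then show ?thesis unfolding h_def using s' T by simp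
    qed
    ultimately have "h t = 0" using no_sep by blast
    then show ?thesis unfolding h_def by simp
  qed
  define \<mu> where "\<mu> p = (if p = t then 1 else - e p t)" for p
  have "(\<Sum>p\<in>insert t T. \<mu> p * \<sigma> (a * p + b)) = 0" for a b
  proof -
    have "(\<Sum>p\<in>insert t T. \<mu> p * \<sigma> (a * p + b)) = \<sigma> (a * t + b) - (\<Sum>p\<in>T. \<sigma> (a * p + b) * e p t)"
      using T unfolding \<mu>_def by (auto simp: sum_negf[symmetric] mult.commute intro!: sum.cong)
    then show ?thesis using eval_t[OF in_ridge_span_ridge, of a b] by simp
  qed
  then have "\<exists>p. \<forall>x. \<sigma> x = poly p x"
    by (intro relation_imp_polynomial[OF cont, of "insert t T" t \<mu>]) (use T in \<open>auto simp: \<mu>_def\<close>)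
  then show False using np unfolding non_polynomial_def by blast
qed

lemma ridge_span_interpolates:
  assumes cont: "continuous_on UNIV \<sigma>" and np: "non_polynomial \<sigma>" and fin: "finite T"
  shows "\<exists>f. in_ridge_span \<sigma> f \<and> (\<forall>t\<in>T. f t = y t)"
  using fin
proof (induction T arbitrary: y rule: finite_induct)
  case empty then show ?case using in_ridge_span_const by blast
next
  case (insert t T)
  obtain f where f: "in_ridge_span \<sigma> f" "\<forall>s\<in>T. f s = 0" "f t \<noteq> 0"
    using ridge_span_separates_point[OF cont np insert.hyps(1,2) insert.IH] by blast
  obtain g where g: "in_ridge_span \<sigma> g" "\<forall>s\<in>T. g s = y s" using insert.IH by blast
  have "in_ridge_span \<sigma> (\<lambda>x. g x + (y t - g t) / f t * f x)"
    by (intro in_ridge_span_add in_ridge_span_scale f g)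
  moreover have "\<forall>s\<in>insert t T. g s + (y t - g t) / f t * f s = y s" using f g by auto
  ultimately show ?case by blast
qed

lemma ridge_span_common_nodes:
  assumes "\<forall>c<(e::nat). in_ridge_span \<sigma> (F c)"
  shows "\<exists>U. finite U \<and> (\<forall>c<e. ridge_span_on \<sigma> U (F c))"
proof -
  obtain U where U: "\<forall>c<e. finite (U c) \<and> ridge_span_on \<sigma> (U c) (F c)"
    using assms unfolding in_ridge_span_def by metis
  then have "finite (\<Union>c<e. U c)" by (intro finite_UN_I) auto
  moreover have "ridge_span_on \<sigma> (\<Union>c<e. U c) (F c)" if "c < e" for c
    using U that calculation ridge_span_on_mono[of \<sigma> "U c" "F c" "\<Union>c<e. U c"] by blast
  ultimately show ?thesis by blast
qed

text \<open>A generic direction \<open>(1, \<tau>, \<tau>\<^sup>2, \<dots>)\<close> avoids the finitely many roots of the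
  polynomials \<open>\<Sum>j<d. (x j - y j) X\<^sup>j\<close>.\<close>

lemma exists_injective_linear_form:
  fixes D :: "(nat \<Rightarrow> real) set"
  assumes fin: "finite D" and zero: "\<forall>x\<in>D. \<forall>c\<ge>d. x c = 0"
  shows "\<exists>w. inj_on (\<lambda>x. \<Sum>j<d. w j * x j) D"
proof -
  define pp where "pp x y = (\<Sum>j<d. monom (x j - y j) j)" for x y :: "nat \<Rightarrow> real"
  define B where "B = (\<Union>(x, y)\<in>{(x, y). x \<in> D \<and> y \<in> D \<and> x \<noteq> y}. {t. poly (pp x y) t = 0})"
  have nz: "pp x y \<noteq> 0" if xy: "x \<in> D" "y \<in> D" "x \<noteq> y" for x y
  proof
    assume z: "pp x y = 0"
    obtain j where j: "x j \<noteq> y j" using xy(3) by (auto simp: fun_eq_iff)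
    then have "j < d" using zero xy by (metis not_le)
    then have "coeff (pp x y) j = x j - y j" unfolding pp_def by (simp add: coeff_sum coeff_monom)
    then show False using z j by simp
  qed
  have "finite {(x, y). x \<in> D \<and> y \<in> D \<and> x \<noteq> y}"
    by (rule finite_subset[of _ "D \<times> D"]) (use fin in auto)
  then have "finite B" unfolding B_def using nz poly_roots_finite by auto
  then obtain \<tau> :: real where \<tau>: "\<tau> \<notin> B"
    by (metis UNIV_I ex_new_if_finite infinite_UNIV_char_0)
  have "inj_on (\<lambda>x. \<Sum>j<d. \<tau> ^ j * x j) D"
  proof (rule inj_onI, rule ccontr)
    fix x y assume xy: "x \<in> D" "y \<in> D" "(\<Sum>j<d. \<tau> ^ j * x j) = (\<Sum>j<d. \<tau> ^ j * y j)" "x \<noteq> y"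
    have "poly (pp x y) \<tau> = (\<Sum>j<d. \<tau> ^ j * x j) - (\<Sum>j<d. \<tau> ^ j * y j)"
      unfolding pp_def by (simp add: poly_sum poly_monom sum_subtractf[symmetric] algebra_simps)
    then show False using \<tau> xy unfolding B_def by auto
  qed
  then show ?thesis by blast
qed

definition truncate :: "nat \<Rightarrow> (nat \<Rightarrow> real) \<Rightarrow> (nat \<Rightarrow> real)" where
  "truncate k x = (\<lambda>c. if c < k then x c else 0)"

lemma truncate_cong: "(\<And>c. c < k \<Longrightarrow> v c = v' c) \<Longrightarrow> truncate k v = truncate k v'"
  unfolding truncate_def by auto

lemma truncate_idem [simp]: "truncate k (truncate k v) = truncate k v"
  unfolding truncate_def by auto

lemma mlp_truncate_input: "mlp \<sigma> d e f \<Longrightarrow> f (truncate d x) = f x"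
proof (induction arbitrary: x rule: mlp.induct)
  case (mlp_affine d e f) then show ?case unfolding is_affine_def truncate_def by auto
next
  case (mlp_layer d h g e f)
  then have "g (truncate d x) = g x" unfolding is_affine_def truncate_def by auto
  then show ?case by simp
qed

text \<open>A generic linear form separates the data points, which reduces the problem to univariate
  interpolation in the ridge span.\<close>

lemma mlp_interpolates:
  assumes cont: "continuous_on UNIV \<sigma>" and np: "non_polynomial \<sigma>"
    and fin: "finite D" and zero: "\<forall>x\<in>D. \<forall>c\<ge>d. x c = 0"
  shows "\<exists>f. mlp \<sigma> d e f \<and> (\<forall>x\<in>D. \<forall>c<e. f x c = G x c)"
proof -
  obtain w where w: "inj_on (\<lambda>x. \<Sum>j<d. w j * x j) D" using exists_injective_linear_form[OF fin zero] by blast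
  define lin where "lin x = (\<Sum>j<d. w j * x j)" for x
  have "\<forall>c<e. \<exists>f. in_ridge_span \<sigma> f \<and> (\<forall>t\<in>lin ` D. f t = G (inv_into D lin t) c)"
    using fin by (intro allI impI ridge_span_interpolates[OF cont np]) simp
  then obtain F where F: "\<forall>c<e. in_ridge_span \<sigma> (F c) \<and> (\<forall>t\<in>lin ` D. F c t = G (inv_into D lin t) c)"
    by metis
  obtain U where U: "finite U" "\<forall>c<e. ridge_span_on \<sigma> U (F c)"
    using ridge_span_common_nodes[of e \<sigma> F] F by blast
  obtain W C where WC: "\<forall>c<e. \<forall>t. F c t = C c + (\<Sum>u\<in>U. W c u * \<sigma> (fst u * t + snd u))"
    using U(2) unfolding ridge_span_on_def by metis
  obtain h where h: "bij_betw h {..<card U} U" using ex_bij_betw_nat_finite[OF U(1)] by (auto simp: atLeast0LessThan)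
  define g where "g x = (\<lambda>q. if q < card U then (\<Sum>j<d. (fst (h q) * w j) * x j) + snd (h q) else 0)" for x
  define fo where "fo y = (\<lambda>c. if c < e then (\<Sum>q<card U. W c (h q) * y q) + C c else 0)" for y
  define f where "f x = fo (\<lambda>q. \<sigma> (g x q))" for x
  have "is_affine d (card U) g" unfolding is_affine_def g_def
    by (intro exI[of _ "\<lambda>q j. fst (h q) * w j"] exI[of _ "\<lambda>q. snd (h q)"]) simp
  moreover have "is_affine (card U) e fo" unfolding is_affine_def fo_def
    by (intro exI[of _ "\<lambda>c q. W c (h q)"] exI[of _ C]) simp
  ultimately have mlp: "mlp \<sigma> d e f" unfolding f_def by (blast intro: mlp_layer mlp_affine)
  have "f x c = G x c" if x: "x \<in> D" and c: "c < e" for x c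
  proof -
    have "f x c = (\<Sum>q<card U. W c (h q) * \<sigma> (fst (h q) * lin x + snd (h q))) + C c"
      unfolding f_def fo_def g_def lin_def using c by (simp add: sum_distrib_left algebra_simps)
    also have "\<dots> = F c (lin x)"
      using WC c sum.reindex_bij_betw[OF h, of "\<lambda>u. W c u * \<sigma> (fst u * lin x + snd u)"] by simp
    also have "\<dots> = G x c" using F c x inv_into_f_f[OF w x] unfolding lin_def by auto
    finally show ?thesis .
  qed
  then show ?thesis using mlp by blast
qed

section \<open>Idealised PPGN++\<close>

lemma finite_simple_adj: "finite (simple_adj n)"
proof -
  let ?F = "\<lambda>h i j. if i < n \<and> j < n then h (i, j) else (0::real)"
  have "simple_adj n \<subseteq> ?F ` PiE ({..<n} \<times> {..<n}) (\<lambda>_. {0, 1})"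
  proof
    fix X assume X: "X \<in> simple_adj n"
    let ?h = "restrict (\<lambda>(i, j). X i j) ({..<n} \<times> {..<n})"
    have "?h \<in> PiE ({..<n} \<times> {..<n}) (\<lambda>_. {0, 1})" using X unfolding simple_adj_def by auto
    moreover have "X = ?F ?h" using X unfolding simple_adj_def by (auto simp: fun_eq_iff)
    ultimately show "X \<in> ?F ` PiE ({..<n} \<times> {..<n}) (\<lambda>_. {0, 1})" by blast
  qed
  moreover have "finite (PiE ({..<n} \<times> {..<n}) (\<lambda>_. {0::real, 1}))" by (intro finite_PiE) auto
  ultimately show ?thesis by (meson finite_imageI finite_subset)
qed

definition ppgn_layer :: "nat \<Rightarrow> nat \<Rightarrow> nat
  \<Rightarrow> ((nat \<Rightarrow> real) \<Rightarrow> (nat \<Rightarrow> real)) \<Rightarrow> ((nat \<Rightarrow> real) \<Rightarrow> (nat \<Rightarrow> real))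
  \<Rightarrow> ((nat \<Rightarrow> real) \<Rightarrow> (nat \<Rightarrow> real)) \<Rightarrow> ((nat \<Rightarrow> real) \<Rightarrow> (nat \<Rightarrow> real))
  \<Rightarrow> ((nat \<Rightarrow> real) \<Rightarrow> (nat \<Rightarrow> real)) \<Rightarrow> ((nat \<Rightarrow> real) \<Rightarrow> (nat \<Rightarrow> real))
  \<Rightarrow> (nat \<Rightarrow> nat \<Rightarrow> nat \<Rightarrow> real) \<Rightarrow> (nat \<Rightarrow> nat \<Rightarrow> nat \<Rightarrow> real)" where
  "ppgn_layer n e d m1d m1o m2d m2o m3d m3o T = pair_apply m3d m3o
     (concat_ch e (chmatmul n (pair_apply m1d m1o (concat_ch d T (transp_ch T))) (pair_apply m2d m2o T)) T)"

inductive ideal_ppgn :: "nat \<Rightarrow> nat \<Rightarrow> ((nat \<Rightarrow> nat \<Rightarrow> real) \<Rightarrow> (nat \<Rightarrow> nat \<Rightarrow> nat \<Rightarrow> real)) \<Rightarrow> bool"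
  for n where
  ideal_ppgn_init: "ideal_ppgn n 1 (\<lambda>X i j c. if c = 0 then X i j else 0)"
| ideal_ppgn_step: "ideal_ppgn n d Z \<Longrightarrow> ideal_ppgn n d' (\<lambda>X. ppgn_layer n e d
      (m1d \<circ> truncate (2 * d)) (m1o \<circ> truncate (2 * d)) (m2d \<circ> truncate d) (m2o \<circ> truncate d)
      (m3d \<circ> truncate (e + d)) (m3o \<circ> truncate (e + d)) (Z X))"

definition tensor_agree :: "nat \<Rightarrow> nat \<Rightarrow> (nat \<Rightarrow> nat \<Rightarrow> nat \<Rightarrow> real) \<Rightarrow> (nat \<Rightarrow> nat \<Rightarrow> nat \<Rightarrow> real) \<Rightarrow> bool" where
  "tensor_agree n d A B \<longleftrightarrow> (\<forall>i<n. \<forall>j<n. \<forall>c<d. A i j c = B i j c)"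

lemma tensor_agree_truncate:
  "tensor_agree n d A B \<Longrightarrow> i < n \<Longrightarrow> j < n \<Longrightarrow> truncate d (A i j) = truncate d (B i j)"
  unfolding tensor_agree_def by (auto intro: truncate_cong)

lemma tensor_agree_concat:
  "tensor_agree n d A A' \<Longrightarrow> tensor_agree n e B B' \<Longrightarrow>
     tensor_agree n (d + e) (concat_ch d A B) (concat_ch d A' B')"
  unfolding tensor_agree_def concat_ch_def by auto

lemma tensor_agree_transp: "tensor_agree n d A A' \<Longrightarrow> tensor_agree n d (transp_ch A) (transp_ch A')"
  unfolding tensor_agree_def transp_ch_def by auto

lemma tensor_agree_chmatmul:
  "tensor_agree n e A A' \<Longrightarrow> tensor_agree n e B B' \<Longrightarrow>
     tensor_agree n e (chmatmul n A B) (chmatmul n A' B')"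
  unfolding tensor_agree_def chmatmul_def by (auto intro!: sum.cong)

lemma tensor_agree_pair_apply:
  assumes "mlp \<sigma> d e fd" "mlp \<sigma> d e fo" and "tensor_agree n d A' A"
    and fit: "\<forall>i<n. \<forall>j<n. \<forall>c<e. fd (truncate d (A i j)) c = md (truncate d (A i j)) c
                                 \<and> fo (truncate d (A i j)) c = mo (truncate d (A i j)) c"
  shows "tensor_agree n e (pair_apply fd fo A') (pair_apply (md \<circ> truncate d) (mo \<circ> truncate d) A)"
  unfolding tensor_agree_def
proof (intro allI impI)
  fix i j c assume ij: "i < n" "j < n" "c < e"
  have trunc: "truncate d (A' i j) = truncate d (A i j)" using tensor_agree_truncate[OF assms(3) ij(1,2)] .
  have "fd (A' i j) = fd (truncate d (A i j))"
    using mlp_truncate_input[OF assms(1), of "A' i j"] trunc by simp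
  moreover have "fo (A' i j) = fo (truncate d (A i j))"
    using mlp_truncate_input[OF assms(2), of "A' i j"] trunc by simp
  ultimately show "pair_apply fd fo A' i j c = pair_apply (md \<circ> truncate d) (mo \<circ> truncate d) A i j c"
    unfolding pair_apply_def using fit[rule_format, OF ij] by (cases "i = j") auto
qed

lemma mlps_interpolate_tensors:
  assumes "continuous_on UNIV \<sigma>" "non_polynomial \<sigma>"
  shows "\<exists>fd fo. mlp \<sigma> d e fd \<and> mlp \<sigma> d e fo \<and>
    (\<forall>X\<in>simple_adj n. \<forall>i<n. \<forall>j<n. \<forall>c<e. fd (truncate d (A X i j)) c = md (truncate d (A X i j)) c
                                         \<and> fo (truncate d (A X i j)) c = mo (truncate d (A X i j)) c)"
proof -
  define D where "D = (\<lambda>(X, i, j). truncate d (A X i j)) ` (simple_adj n \<times> {..<n} \<times> {..<n})"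
  have fin: "finite D" unfolding D_def using finite_simple_adj by simp
  have zero: "\<forall>x\<in>D. \<forall>c\<ge>d. x c = 0" by (clarsimp simp: D_def truncate_def)
  obtain fd where fd: "mlp \<sigma> d e fd" "\<forall>x\<in>D. \<forall>c<e. fd x c = md x c"
    using mlp_interpolates[OF assms fin zero] by blast
  obtain fo where fo: "mlp \<sigma> d e fo" "\<forall>x\<in>D. \<forall>c<e. fo x c = mo x c"
    using mlp_interpolates[OF assms fin zero] by blast
  have "truncate d (A X i j) \<in> D" if "X \<in> simple_adj n" "i < n" "j < n" for X i j
    unfolding D_def using that by force
  then show ?thesis using fd fo by (intro exI[of _ fd] exI[of _ fo]) auto
qed

lemma tensor_agree_ppgn_layer:
  fixes T T' :: "nat \<Rightarrow> nat \<Rightarrow> nat \<Rightarrow> real" and n d e :: nat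
    and m1d m1o m2d m2o :: "(nat \<Rightarrow> real) \<Rightarrow> (nat \<Rightarrow> real)"
  defines "A \<equiv> concat_ch d T (transp_ch T)"
  defines "B \<equiv> concat_ch e (chmatmul n (pair_apply (m1d \<circ> truncate (2 * d)) (m1o \<circ> truncate (2 * d)) A)
    (pair_apply (m2d \<circ> truncate d) (m2o \<circ> truncate d) T)) T"
  assumes T: "tensor_agree n d T' T"
    and f1: "mlp \<sigma> (2 * d) e f1d" "mlp \<sigma> (2 * d) e f1o"
      "\<forall>i<n. \<forall>j<n. \<forall>c<e. f1d (truncate (2 * d) (A i j)) c = m1d (truncate (2 * d) (A i j)) c
                          \<and> f1o (truncate (2 * d) (A i j)) c = m1o (truncate (2 * d) (A i j)) c"
    and f2: "mlp \<sigma> d e f2d" "mlp \<sigma> d e f2o"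
      "\<forall>i<n. \<forall>j<n. \<forall>c<e. f2d (truncate d (T i j)) c = m2d (truncate d (T i j)) c
                          \<and> f2o (truncate d (T i j)) c = m2o (truncate d (T i j)) c"
    and f3: "mlp \<sigma> (e + d) d' f3d" "mlp \<sigma> (e + d) d' f3o"
      "\<forall>i<n. \<forall>j<n. \<forall>c<d'. f3d (truncate (e + d) (B i j)) c = m3d (truncate (e + d) (B i j)) c
                           \<and> f3o (truncate (e + d) (B i j)) c = m3o (truncate (e + d) (B i j)) c"
  shows "tensor_agree n d' (ppgn_layer n e d f1d f1o f2d f2o f3d f3o T')
    (ppgn_layer n e d (m1d \<circ> truncate (2 * d)) (m1o \<circ> truncate (2 * d)) (m2d \<circ> truncate d)
       (m2o \<circ> truncate d) (m3d \<circ> truncate (e + d)) (m3o \<circ> truncate (e + d)) T)"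
proof -
  have "tensor_agree n (2 * d) (concat_ch d T' (transp_ch T')) A"
    unfolding A_def using tensor_agree_concat[OF T tensor_agree_transp[OF T]] by (simp add: mult_2)
  then have "tensor_agree n e (pair_apply f1d f1o (concat_ch d T' (transp_ch T')))
      (pair_apply (m1d \<circ> truncate (2 * d)) (m1o \<circ> truncate (2 * d)) A)"
    by (rule tensor_agree_pair_apply[OF f1(1,2) _ f1(3)])
  moreover have "tensor_agree n e (pair_apply f2d f2o T') (pair_apply (m2d \<circ> truncate d) (m2o \<circ> truncate d) T)"
    by (rule tensor_agree_pair_apply[OF f2(1,2) T f2(3)])
  ultimately have "tensor_agree n (e + d)
      (concat_ch e (chmatmul n (pair_apply f1d f1o (concat_ch d T' (transp_ch T'))) (pair_apply f2d f2o T')) T') B"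
    unfolding B_def by (intro tensor_agree_concat tensor_agree_chmatmul T)
  then show ?thesis unfolding ppgn_layer_def B_def[symmetric] A_def[symmetric]
    by (rule tensor_agree_pair_apply[OF f3(1,2) _ f3(3)])
qed

text \<open>On simple graphs every idealised PPGN++ is realised exactly, since its functions only
  need to be interpolated at finitely many points.\<close>

lemma ideal_ppgn_realisable:
  assumes cont: "continuous_on UNIV \<sigma>" and np: "non_polynomial \<sigma>"
  shows "ideal_ppgn n d Z \<Longrightarrow> \<exists>Z'. ppgn_layers \<sigma> n d Z' \<and> (\<forall>X\<in>simple_adj n. tensor_agree n d (Z' X) (Z X))"
proof (induction rule: ideal_ppgn.induct)
  case ideal_ppgn_init
  show ?case
    by (rule exI[of _ "\<lambda>X i j c. if c = 0 then X i j else 0"])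
      (simp add: tensor_agree_def ppgn_init[unfolded One_nat_def])
next
  case (ideal_ppgn_step d Z d' e m1d m1o m2d m2o m3d m3o)
  obtain Z' where Z': "ppgn_layers \<sigma> n d Z'" "\<forall>X\<in>simple_adj n. tensor_agree n d (Z' X) (Z X)"
    using ideal_ppgn_step.IH by blast
  define A where "A X = concat_ch d (Z X) (transp_ch (Z X))" for X
  define B where "B X = concat_ch e (chmatmul n (pair_apply (m1d \<circ> truncate (2 * d)) (m1o \<circ> truncate (2 * d)) (A X))
    (pair_apply (m2d \<circ> truncate d) (m2o \<circ> truncate d) (Z X))) (Z X)" for X
  obtain f1d f1o where f1: "mlp \<sigma> (2 * d) e f1d" "mlp \<sigma> (2 * d) e f1o"
    "\<forall>X\<in>simple_adj n. \<forall>i<n. \<forall>j<n. \<forall>c<e. f1d (truncate (2 * d) (A X i j)) c = m1d (truncate (2 * d) (A X i j)) c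
                                         \<and> f1o (truncate (2 * d) (A X i j)) c = m1o (truncate (2 * d) (A X i j)) c"
    using mlps_interpolate_tensors[OF cont np] by blast
  obtain f2d f2o where f2: "mlp \<sigma> d e f2d" "mlp \<sigma> d e f2o"
    "\<forall>X\<in>simple_adj n. \<forall>i<n. \<forall>j<n. \<forall>c<e. f2d (truncate d (Z X i j)) c = m2d (truncate d (Z X i j)) c
                                         \<and> f2o (truncate d (Z X i j)) c = m2o (truncate d (Z X i j)) c"
    using mlps_interpolate_tensors[OF cont np] by blast
  obtain f3d f3o where f3: "mlp \<sigma> (e + d) d' f3d" "mlp \<sigma> (e + d) d' f3o"
    "\<forall>X\<in>simple_adj n. \<forall>i<n. \<forall>j<n. \<forall>c<d'. f3d (truncate (e + d) (B X i j)) c = m3d (truncate (e + d) (B X i j)) c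
                                          \<and> f3o (truncate (e + d) (B X i j)) c = m3o (truncate (e + d) (B X i j)) c"
    using mlps_interpolate_tensors[OF cont np] by blast
  have "ppgn_layers \<sigma> n d' (\<lambda>X. ppgn_layer n e d f1d f1o f2d f2o f3d f3o (Z' X))"
    unfolding ppgn_layer_def using ppgn_step[OF Z'(1) f1(1,2) f2(1,2) f3(1,2)] .
  moreover have "tensor_agree n d' (ppgn_layer n e d f1d f1o f2d f2o f3d f3o (Z' X))
      (ppgn_layer n e d (m1d \<circ> truncate (2 * d)) (m1o \<circ> truncate (2 * d)) (m2d \<circ> truncate d)
         (m2o \<circ> truncate d) (m3d \<circ> truncate (e + d)) (m3o \<circ> truncate (e + d)) (Z X))"
    if X: "X \<in> simple_adj n" for X
    using tensor_agree_ppgn_layer[OF bspec[OF Z'(2) X] f1(1,2) _ f2(1,2) _ f3(1,2)]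
      bspec[OF f1(3) X] bspec[OF f2(3) X] bspec[OF f3(3) X] unfolding A_def B_def by blast
  ultimately show ?case by blast
qed

definition ppgn_computes :: "nat \<Rightarrow> ((nat \<Rightarrow> nat \<Rightarrow> real) \<Rightarrow> (nat \<Rightarrow> nat \<Rightarrow> nat \<Rightarrow> real)) \<Rightarrow> nat
   \<Rightarrow> ((nat \<Rightarrow> nat \<Rightarrow> real) \<Rightarrow> nat \<Rightarrow> nat \<Rightarrow> real) \<Rightarrow> bool" where
  "ppgn_computes n Z d G \<longleftrightarrow> (\<exists>c<d. \<forall>X\<in>simple_adj n. \<forall>i<n. \<forall>j<n. Z X i j c = G X i j)"

definition ppgn_extends :: "nat \<Rightarrow> ((nat \<Rightarrow> nat \<Rightarrow> real) \<Rightarrow> (nat \<Rightarrow> nat \<Rightarrow> nat \<Rightarrow> real)) \<Rightarrow> nat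
   \<Rightarrow> ((nat \<Rightarrow> nat \<Rightarrow> real) \<Rightarrow> (nat \<Rightarrow> nat \<Rightarrow> nat \<Rightarrow> real)) \<Rightarrow> nat \<Rightarrow> bool" where
  "ppgn_extends n Z d Z' d' \<longleftrightarrow> ideal_ppgn n d' Z' \<and> (\<forall>G. ppgn_computes n Z d G \<longrightarrow> ppgn_computes n Z' d' G)"

lemma ppgn_extends_refl: "ideal_ppgn n d Z \<Longrightarrow> ppgn_extends n Z d Z d"
  unfolding ppgn_extends_def by auto

lemma ppgn_extends_trans:
  "ppgn_extends n Z d Z' d' \<Longrightarrow> ppgn_extends n Z' d' Z'' d'' \<Longrightarrow> ppgn_extends n Z d Z'' d''"
  unfolding ppgn_extends_def by auto

lemma ppgn_extends_ideal: "ppgn_extends n Z d Z' d' \<Longrightarrow> ideal_ppgn n d' Z'"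
  unfolding ppgn_extends_def by simp

lemma ppgn_extends_computes: "ppgn_extends n Z d Z' d' \<Longrightarrow> ppgn_computes n Z d G \<Longrightarrow> ppgn_computes n Z' d' G"
  unfolding ppgn_extends_def by simp

lemma ppgn_computes_cong:
  "ppgn_computes n Z d G \<Longrightarrow> (\<And>X i j. X \<in> simple_adj n \<Longrightarrow> i < n \<Longrightarrow> j < n \<Longrightarrow> G X i j = G' X i j)
     \<Longrightarrow> ppgn_computes n Z d G'"
  unfolding ppgn_computes_def by auto

lemma ppgn_computes_channel:
  "ppgn_computes n Z d G \<Longrightarrow> \<exists>c. \<forall>X\<in>simple_adj n. \<forall>i<n. \<forall>j<n. truncate d (Z X i j) c = G X i j"
  unfolding ppgn_computes_def truncate_def by auto

lemma ppgn_extends_new_channel: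
  assumes "ideal_ppgn n (Suc d) Z'" and keep: "\<And>X i j c. c < d \<Longrightarrow> Z' X i j c = Z X i j c"
    and new: "\<And>X i j. Z' X i j d = G X i j"
  shows "\<exists>Z' d'. ppgn_extends n Z d Z' d' \<and> ppgn_computes n Z' d' G"
proof (intro exI conjI)
  show "ppgn_computes n Z' (Suc d) G" unfolding ppgn_computes_def using new by auto
  show "ppgn_extends n Z d Z' (Suc d)" unfolding ppgn_extends_def
  proof (intro conjI allI impI)
    fix G' assume "ppgn_computes n Z d G'"
    then obtain c where "c < d" "\<forall>X\<in>simple_adj n. \<forall>i<n. \<forall>j<n. Z X i j c = G' X i j"
      unfolding ppgn_computes_def by blast
    then show "ppgn_computes n Z' (Suc d) G'" unfolding ppgn_computes_def using keep
      by (intro exI[of _ c]) auto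
  qed (rule assms(1))
qed

lemma ppgn_extend_pointwise:
  assumes "ideal_ppgn n d Z"
  shows "\<exists>Z' d'. ppgn_extends n Z d Z' d' \<and>
           ppgn_computes n Z' d' (\<lambda>X i j. (if i = j then fd else fo) (truncate d (Z X i j)))"
proof -
  define m3 where "m3 f v = (\<lambda>c. if c < d then v c else if c = d then f v else 0)" for f and v :: "nat \<Rightarrow> real"
  define zero :: "(nat \<Rightarrow> real) \<Rightarrow> (nat \<Rightarrow> real)" where "zero v = (\<lambda>c. 0)" for v
  define Z' where "Z' X = ppgn_layer n 0 d (zero \<circ> truncate (2 * d)) (zero \<circ> truncate (2 * d))
      (zero \<circ> truncate d) (zero \<circ> truncate d) (m3 fd \<circ> truncate (0 + d)) (m3 fo \<circ> truncate (0 + d)) (Z X)" for X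
  have "ideal_ppgn n (Suc d) Z'" unfolding Z'_def by (rule ideal_ppgn_step[OF assms])
  moreover have "Z' X i j c = Z X i j c" if "c < d" for X i j c
    using that unfolding Z'_def ppgn_layer_def pair_apply_def concat_ch_def m3_def truncate_def by simp
  moreover have "Z' X i j d = (if i = j then fd else fo) (truncate d (Z X i j))" for X i j
    unfolding Z'_def ppgn_layer_def pair_apply_def m3_def by (simp add: concat_ch_def)
  ultimately show ?thesis by (rule ppgn_extends_new_channel)
qed

lemma ppgn_extend_matmul_raw:
  assumes "ideal_ppgn n d Z"
  shows "\<exists>Z' d'. ppgn_extends n Z d Z' d' \<and> ppgn_computes n Z' d'
    (\<lambda>X i j. \<Sum>k<n. u (truncate d (Z X i k)) (truncate d (Z X k i)) * v (truncate d (Z X k j)))"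
proof -
  define m1 where "m1 w = (\<lambda>c::nat. if c = 0 then u (truncate d w) (truncate d (\<lambda>c'. w (c' + d))) else 0)"
    for w :: "nat \<Rightarrow> real"
  define m2 where "m2 w = (\<lambda>c::nat. if c = 0 then v (truncate d w) else 0)" for w :: "nat \<Rightarrow> real"
  define m3 where "m3 w = (\<lambda>c::nat. if c < d then w (c + 1) else if c = d then w 0 else 0)" for w :: "nat \<Rightarrow> real"
  define Z' where "Z' X = ppgn_layer n 1 d (m1 \<circ> truncate (2 * d)) (m1 \<circ> truncate (2 * d))
      (m2 \<circ> truncate d) (m2 \<circ> truncate d) (m3 \<circ> truncate (1 + d)) (m3 \<circ> truncate (1 + d)) (Z X)" for X
  have "ideal_ppgn n (Suc d) Z'" unfolding Z'_def by (rule ideal_ppgn_step[OF assms])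
  moreover have "Z' X i j c = Z X i j c" if "c < d" for X i j c
    using that unfolding Z'_def ppgn_layer_def pair_apply_def concat_ch_def m3_def truncate_def by simp
  moreover have "Z' X i j d = (\<Sum>k<n. u (truncate d (Z X i k)) (truncate d (Z X k i)) * v (truncate d (Z X k j)))"
    for X i j
  proof -
    have "truncate d (truncate (2 * d) (concat_ch d (Z X) (transp_ch (Z X)) i k)) = truncate d (Z X i k)"
      "truncate d (\<lambda>c. truncate (2 * d) (concat_ch d (Z X) (transp_ch (Z X)) i k) (c + d)) = truncate d (Z X k i)"
      for k unfolding truncate_def concat_ch_def transp_ch_def by (auto simp: fun_eq_iff)
    moreover have "m3 (truncate (1 + d) w) d = w 0" for w unfolding m3_def truncate_def by simp
    ultimately show ?thesis unfolding Z'_def ppgn_layer_def pair_apply_def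
      by (simp add: chmatmul_def m1_def m2_def concat_ch_def)
  qed
  ultimately show ?thesis by (rule ppgn_extends_new_channel)
qed

lemma ppgn_extend_diag_const:
  assumes "ideal_ppgn n d Z"
  shows "\<exists>Z' d'. ppgn_extends n Z d Z' d' \<and> ppgn_computes n Z' d' (\<lambda>X i j. if i = j then a else b)"
proof -
  obtain Z' d' where Z': "ppgn_extends n Z d Z' d'"
    "ppgn_computes n Z' d' (\<lambda>X i j. (if i = j then (\<lambda>_. a) else (\<lambda>_. b)) (truncate d (Z X i j)))"
    using ppgn_extend_pointwise[OF assms] by blast
  have "ppgn_computes n Z' d' (\<lambda>X i j. if i = j then a else b)"
    by (rule ppgn_computes_cong[OF Z'(2)]) simp
  with Z'(1) show ?thesis by blast
qed

lemma ppgn_extend_map2: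
  assumes "ideal_ppgn n d Z" "ppgn_computes n Z d G1" "ppgn_computes n Z d G2"
  shows "\<exists>Z' d'. ppgn_extends n Z d Z' d' \<and> ppgn_computes n Z' d' (\<lambda>X i j. F (G1 X i j) (G2 X i j))"
proof -
  obtain c1 where c1: "\<forall>X\<in>simple_adj n. \<forall>i<n. \<forall>j<n. truncate d (Z X i j) c1 = G1 X i j"
    using ppgn_computes_channel[OF assms(2)] by blast
  obtain c2 where c2: "\<forall>X\<in>simple_adj n. \<forall>i<n. \<forall>j<n. truncate d (Z X i j) c2 = G2 X i j"
    using ppgn_computes_channel[OF assms(3)] by blast
  obtain Z' d' where Z': "ppgn_extends n Z d Z' d'" "ppgn_computes n Z' d'
      (\<lambda>X i j. (if i = j then (\<lambda>v. F (v c1) (v c2)) else (\<lambda>v. F (v c1) (v c2))) (truncate d (Z X i j)))"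
    using ppgn_extend_pointwise[OF assms(1)] by blast
  have "ppgn_computes n Z' d' (\<lambda>X i j. F (G1 X i j) (G2 X i j))"
    using c1 c2 by (intro ppgn_computes_cong[OF Z'(2)]) simp
  with Z'(1) show ?thesis by blast
qed

lemma ppgn_extend_matmul:
  assumes "ideal_ppgn n d Z" "ppgn_computes n Z d G1" "ppgn_computes n Z d G2"
  shows "\<exists>Z' d'. ppgn_extends n Z d Z' d' \<and> ppgn_computes n Z' d' (\<lambda>X i j. \<Sum>k<n. G1 X i k * G2 X k j)"
proof -
  obtain c1 where c1: "\<forall>X\<in>simple_adj n. \<forall>i<n. \<forall>j<n. truncate d (Z X i j) c1 = G1 X i j"
    using ppgn_computes_channel[OF assms(2)] by blast
  obtain c2 where c2: "\<forall>X\<in>simple_adj n. \<forall>i<n. \<forall>j<n. truncate d (Z X i j) c2 = G2 X i j"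
    using ppgn_computes_channel[OF assms(3)] by blast
  obtain Z' d' where Z': "ppgn_extends n Z d Z' d'" "ppgn_computes n Z' d'
      (\<lambda>X i j. \<Sum>k<n. truncate d (Z X i k) c1 * truncate d (Z X k j) c2)"
    using ppgn_extend_matmul_raw[OF assms(1), of "\<lambda>v w. v c1" "\<lambda>v. v c2"] by blast
  have "ppgn_computes n Z' d' (\<lambda>X i j. \<Sum>k<n. G1 X i k * G2 X k j)"
    using c1 c2 by (intro ppgn_computes_cong[OF Z'(2)] sum.cong) auto
  with Z'(1) show ?thesis by blast
qed

lemma ppgn_extend_transp_matmul:
  assumes "ideal_ppgn n d Z" "ppgn_computes n Z d G1" "ppgn_computes n Z d G2"
  shows "\<exists>Z' d'. ppgn_extends n Z d Z' d' \<and> ppgn_computes n Z' d' (\<lambda>X i j. \<Sum>k<n. G1 X k i * G2 X k j)"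
proof -
  obtain c1 where c1: "\<forall>X\<in>simple_adj n. \<forall>i<n. \<forall>j<n. truncate d (Z X i j) c1 = G1 X i j"
    using ppgn_computes_channel[OF assms(2)] by blast
  obtain c2 where c2: "\<forall>X\<in>simple_adj n. \<forall>i<n. \<forall>j<n. truncate d (Z X i j) c2 = G2 X i j"
    using ppgn_computes_channel[OF assms(3)] by blast
  obtain Z' d' where Z': "ppgn_extends n Z d Z' d'" "ppgn_computes n Z' d'
      (\<lambda>X i j. \<Sum>k<n. truncate d (Z X k i) c1 * truncate d (Z X k j) c2)"
    using ppgn_extend_matmul_raw[OF assms(1), of "\<lambda>v w. w c1" "\<lambda>v. v c2"] by blast
  have "ppgn_computes n Z' d' (\<lambda>X i j. \<Sum>k<n. G1 X k i * G2 X k j)"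
    using c1 c2 by (intro ppgn_computes_cong[OF Z'(2)] sum.cong) auto
  with Z'(1) show ?thesis by blast
qed

lemma ppgn_extend_transpose:
  assumes "ideal_ppgn n d Z" "ppgn_computes n Z d G"
  shows "\<exists>Z' d'. ppgn_extends n Z d Z' d' \<and> ppgn_computes n Z' d' (\<lambda>X i j. G X j i)"
proof -
  obtain Z1 d1 where Z1: "ppgn_extends n Z d Z1 d1" "ppgn_computes n Z1 d1 (\<lambda>X i j. if i = j then 1 else 0)"
    using ppgn_extend_diag_const[OF assms(1)] by blast
  obtain Z2 d2 where Z2: "ppgn_extends n Z1 d1 Z2 d2"
    "ppgn_computes n Z2 d2 (\<lambda>X i j. \<Sum>k<n. G X k i * (if k = j then 1 else 0))"
    using ppgn_extend_transp_matmul[OF ppgn_extends_ideal[OF Z1(1)] ppgn_extends_computes[OF Z1(1) assms(2)] Z1(2)]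
    by blast
  have "ppgn_computes n Z2 d2 (\<lambda>X i j. G X j i)"
    by (rule ppgn_computes_cong[OF Z2(2)]) (simp add: if_distrib cong: if_cong)
  then show ?thesis using ppgn_extends_trans[OF Z1(1) Z2(1)] by blast
qed

lemma ppgn_extend_diag:
  assumes "ideal_ppgn n d Z" "ppgn_computes n Z d G"
  shows "\<exists>Z' d'. ppgn_extends n Z d Z' d' \<and> ppgn_computes n Z' d' (\<lambda>X i j. G X i i)"
proof -
  obtain Z1 d1 where Z1: "ppgn_extends n Z d Z1 d1" "ppgn_computes n Z1 d1 (\<lambda>X i j. if i = j then 1 else 0)"
    using ppgn_extend_diag_const[OF assms(1)] by blast
  obtain Z2 d2 where Z2: "ppgn_extends n Z1 d1 Z2 d2"
    "ppgn_computes n Z2 d2 (\<lambda>X i j. G X i j * (if i = j then 1 else 0))"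
    using ppgn_extend_map2[OF ppgn_extends_ideal[OF Z1(1)] ppgn_extends_computes[OF Z1(1) assms(2)] Z1(2)]
    by blast
  obtain Z3 d3 where Z3: "ppgn_extends n Z2 d2 Z3 d3" "ppgn_computes n Z3 d3 (\<lambda>X i j. if i = j then 1 else 1)"
    using ppgn_extend_diag_const[OF ppgn_extends_ideal[OF Z2(1)]] by blast
  obtain Z4 d4 where Z4: "ppgn_extends n Z3 d3 Z4 d4"
    "ppgn_computes n Z4 d4 (\<lambda>X i j. \<Sum>k<n. G X i k * (if i = k then 1 else 0) * (if k = j then 1 else 1))"
    using ppgn_extend_matmul[OF ppgn_extends_ideal[OF Z3(1)] ppgn_extends_computes[OF Z3(1) Z2(2)] Z3(2)]
    by blast
  have "(\<Sum>k<n. G X i k * (if i = k then 1 else 0) * (if k = j then 1 else 1)) = G X i i"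
    if "i < n" for X i j using that by (subst sum.remove[of _ i]) (auto intro!: sum.neutral)
  then have "ppgn_computes n Z4 d4 (\<lambda>X i j. G X i i)"
    by (intro ppgn_computes_cong[OF Z4(2)]) auto
  then show ?thesis
    using ppgn_extends_trans[OF Z1(1) ppgn_extends_trans[OF Z2(1) ppgn_extends_trans[OF Z3(1) Z4(1)]]] by blast
qed

lemma ppgn_extend_select:
  assumes "ideal_ppgn n d Z" "ppgn_computes n Z d G"
  shows "\<exists>Z' d'. ppgn_extends n Z d Z' d' \<and>
           ppgn_computes n Z' d' (\<lambda>X x y. G X (if p then x else y) (if q then x else y))"
proof (cases p; cases q)
  assume "p" "q"
  then show ?thesis using ppgn_extend_diag[OF assms] by simp
next
  assume "p" "\<not> q"
  then show ?thesis using ppgn_extends_refl[OF assms(1)] assms(2) by auto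
next
  assume "\<not> p" "q"
  then show ?thesis using ppgn_extend_transpose[OF assms] by simp
next
  assume "\<not> p" "\<not> q"
  obtain Z1 d1 where Z1: "ppgn_extends n Z d Z1 d1" "ppgn_computes n Z1 d1 (\<lambda>X i j. G X i i)"
    using ppgn_extend_diag[OF assms] by blast
  obtain Z2 d2 where "ppgn_extends n Z1 d1 Z2 d2" "ppgn_computes n Z2 d2 (\<lambda>X i j. G X j j)"
    using ppgn_extend_transpose[OF ppgn_extends_ideal[OF Z1(1)] Z1(2)] by blast
  then show ?thesis using \<open>\<not> p\<close> \<open>\<not> q\<close> ppgn_extends_trans[OF Z1(1)] by auto
qed

lemma ppgn_extend_prod_mset:
  assumes "ideal_ppgn n d Z" "\<forall>e\<in>#M. ppgn_computes n Z d (F e)"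
  shows "\<exists>Z' d'. ppgn_extends n Z d Z' d' \<and> ppgn_computes n Z' d' (\<lambda>X i j. \<Prod>e\<in>#M. F e X i j)"
  using assms(2)
proof (induction M)
  case empty
  then show ?case using ppgn_extend_diag_const[OF assms(1), of 1 1] by simp
next
  case (add x M)
  then obtain Z1 d1 where Z1: "ppgn_extends n Z d Z1 d1" "ppgn_computes n Z1 d1 (\<lambda>X i j. \<Prod>e\<in>#M. F e X i j)"
    by auto
  have "ppgn_computes n Z1 d1 (F x)" using ppgn_extends_computes[OF Z1(1)] add.prems by simp
  then obtain Z2 d2 where "ppgn_extends n Z1 d1 Z2 d2"
    "ppgn_computes n Z2 d2 (\<lambda>X i j. F x X i j * (\<Prod>e\<in>#M. F e X i j))"
    using ppgn_extend_map2[OF ppgn_extends_ideal[OF Z1(1)] _ Z1(2), where F = "(*)"] by blast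
  then show ?case using ppgn_extends_trans[OF Z1(1)] by auto
qed

lemma ppgn_extend_each:
  assumes "ideal_ppgn n d Z" "\<forall>e\<in>#M. ppgn_computes n Z d (F e)"
    and step: "\<And>Z d e. ideal_ppgn n d Z \<Longrightarrow> ppgn_computes n Z d (F e) \<Longrightarrow>
                 \<exists>Z' d'. ppgn_extends n Z d Z' d' \<and> ppgn_computes n Z' d' (H e)"
  shows "\<exists>Z' d'. ppgn_extends n Z d Z' d' \<and> (\<forall>e\<in>#M. ppgn_computes n Z' d' (H e))"
  using assms(2)
proof (induction M)
  case empty then show ?case using ppgn_extends_refl[OF assms(1)] by auto
next
  case (add x M)
  then obtain Z1 d1 where Z1: "ppgn_extends n Z d Z1 d1" "\<forall>e\<in>#M. ppgn_computes n Z1 d1 (H e)" by auto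
  have "ppgn_computes n Z1 d1 (F x)" using ppgn_extends_computes[OF Z1(1)] add.prems by simp
  then obtain Z2 d2 where Z2: "ppgn_extends n Z1 d1 Z2 d2" "ppgn_computes n Z2 d2 (H x)"
    using step[OF ppgn_extends_ideal[OF Z1(1)]] by blast
  then have "\<forall>e\<in>#add_mset x M. ppgn_computes n Z2 d2 (H e)"
    using Z1(2) ppgn_extends_computes[OF Z2(1)] by auto
  then show ?case using ppgn_extends_trans[OF Z1(1) Z2(1)] by blast
qed

lemma ppgn_realise:
  assumes "continuous_on UNIV \<sigma>" "non_polynomial \<sigma>" "ideal_ppgn n d Z" "ppgn_computes n Z d G"
  shows "\<exists>F. ppgn \<sigma> n F \<and> (\<forall>X\<in>simple_adj n. \<forall>i<n. \<forall>j<n. F X i j = G X i j)"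
proof -
  obtain c where c: "c < d" "\<forall>X\<in>simple_adj n. \<forall>i<n. \<forall>j<n. Z X i j c = G X i j"
    using assms(4) unfolding ppgn_computes_def by blast
  obtain Z' where "ppgn_layers \<sigma> n d Z'" "\<forall>X\<in>simple_adj n. tensor_agree n d (Z' X) (Z X)"
    using ideal_ppgn_realisable[OF assms(1-3)] by blast
  with c show ?thesis unfolding ppgn_def tensor_agree_def by (intro exI[of _ "\<lambda>X i j. Z' X i j c"]) auto
qed

section \<open>Vertex elimination with PPGN++\<close>

definition pairs_at :: "nat set set \<Rightarrow> nat \<Rightarrow> nat set set" where
  "pairs_at P v = {p\<in>P. v \<in> p}"

definition proper_pairs :: "nat set \<Rightarrow> nat set set \<Rightarrow> bool" where
  "proper_pairs W P \<longleftrightarrow> (\<forall>p\<in>P. \<exists>x y. p = {x, y} \<and> x \<noteq> y \<and> x \<in> W \<and> y \<in> W)"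

lemma proper_pairs_finite: "finite W \<Longrightarrow> proper_pairs W P \<Longrightarrow> finite P"
  unfolding proper_pairs_def by (rule finite_subset[of _ "Pow W"]) auto

lemma proper_pairs_at:
  assumes "proper_pairs W P" "p \<in> pairs_at P v"
  obtains w where "p = {v, w}" "w \<noteq> v" "w \<in> W"
proof -
  have "p \<in> P" "v \<in> p" using assms(2) unfolding pairs_at_def by auto
  then obtain x y where xy: "p = {x, y}" "x \<noteq> y" "x \<in> W" "y \<in> W" "v \<in> p"
    using assms(1) unfolding proper_pairs_def by auto
  then consider "v = x" | "v = y" by auto
  then show ?thesis
  proof cases
    case 1 then show ?thesis using xy by (intro that[of y]) auto
  next
    case 2 then show ?thesis using xy by (intro that[of x]) (auto simp: insert_commute)
  qed
qed

lemma pairs_at_Int: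
  "proper_pairs W P \<Longrightarrow> v \<noteq> w \<Longrightarrow> pairs_at P v \<inter> pairs_at P w \<subseteq> {{v, w}}"
  unfolding proper_pairs_def pairs_at_def by auto

lemma card_pairs_at_Un:
  assumes "proper_pairs W P" "finite P" "v \<noteq> w"
  shows "card (pairs_at P v) + card (pairs_at P w) \<le> card (pairs_at P v \<union> pairs_at P w) + 1"
proof -
  have fin: "finite (pairs_at P u)" for u using assms(2) unfolding pairs_at_def by simp
  have "card (pairs_at P v \<inter> pairs_at P w) \<le> card {{v, w}}"
    by (rule card_mono) (use pairs_at_Int[OF assms(1,3)] in auto)
  then show ?thesis using card_Un_Int[OF fin fin, of v w] by simp
qed

lemma pairs_at_imp_neighbours:
  assumes "finite W" "proper_pairs W P" "finite B" "card B + k \<le> card (pairs_at P v)"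
  obtains K where "K \<subseteq> W - B - {v}" "card K = k" "\<forall>w\<in>K. {v, w} \<in> P"
proof -
  define N where "N = {w \<in> W - B - {v}. {v, w} \<in> P}"
  have "pairs_at P v \<subseteq> (\<lambda>w. {v, w}) ` (N \<union> B)"
  proof
    fix p assume p: "p \<in> pairs_at P v"
    then obtain w where "p = {v, w}" "w \<noteq> v" "w \<in> W" using proper_pairs_at assms(2) by blast
    with p show "p \<in> (\<lambda>w. {v, w}) ` (N \<union> B)" unfolding N_def pairs_at_def by auto
  qed
  moreover have "finite N" unfolding N_def using assms(1) by simp
  ultimately have "card (pairs_at P v) \<le> card (N \<union> B)"
    using assms(3) by (meson card_image_le card_mono finite_UnI finite_imageI le_trans)
  also have "\<dots> \<le> card N + card B" by (rule card_Un_le)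
  finally have "k \<le> card N" using assms(4) by linarith
  then obtain K where "K \<subseteq> N" "card K = k" using obtain_subset_with_card_n[of k N] by blast
  then show ?thesis using that unfolding N_def by auto
qed

text \<open>The counting behind the edge bounds: if every vertex outside the outputs lay on three
  pairs, one or two such vertices and their pairs would already exceed the budget.\<close>

lemma exists_vertex_few_pairs:
  assumes W: "finite W" "a \<in> W" "b \<in> W" and P: "proper_pairs W P"
    and card_P: "card P \<le> (if a = b then 5 else 4)" and inner: "W - {a, b} \<noteq> {}"
  shows "\<exists>v\<in>W - {a, b}. card (pairs_at P v) \<le> 2"
proof (rule ccontr)
  assume "\<not> ?thesis"
  then have deg: "3 \<le> card (pairs_at P v)" if "v \<in> W - {a, b}" for v using that by force
  have finP: "finite P" using proper_pairs_finite[OF W(1) P] .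
  have sub: "pairs_at P x \<union> pairs_at P y \<subseteq> P" for x y unfolding pairs_at_def by auto
  obtain v where v: "v \<in> W - {a, b}" using inner by blast
  show False
  proof (cases "a = b")
    case False
    have "card {a, b} + 1 \<le> card (pairs_at P v)" using deg[OF v] False by simp
    then obtain K where K: "K \<subseteq> W - {a, b} - {v}" "card K = 1" "\<forall>w\<in>K. {v, w} \<in> P"
      by (rule pairs_at_imp_neighbours[OF W(1) P finite.insertI[OF finite.insertI[OF finite.emptyI]]])
    obtain w where "K = {w}" using K(2) by (rule card_1_singletonE)
    then have w: "w \<in> W - {a, b}" "w \<noteq> v" using K(1) by auto
    have "5 \<le> card (pairs_at P v \<union> pairs_at P w)"
      using card_pairs_at_Un[OF P finP, of v w] deg[OF v] deg[OF w(1)] w(2) by simp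
    also have "\<dots> \<le> card P" by (rule card_mono[OF finP sub])
    finally show False using card_P False by simp
  next
    case True
    have "card {a} + 2 \<le> card (pairs_at P v)" using deg[OF v] by simp
    then obtain K where K: "K \<subseteq> W - {a} - {v}" "card K = 2" "\<forall>w\<in>K. {v, w} \<in> P"
      by (rule pairs_at_imp_neighbours[OF W(1) P finite.insertI[OF finite.emptyI]])
    obtain w1 w2 where w: "K = {w1, w2}" "w1 \<noteq> w2" using K(2) by (meson card_2_iff)
    have w12: "w1 \<in> W - {a, b}" "w2 \<in> W - {a, b}" "v \<noteq> w1" "v \<noteq> w2" using K w True by auto
    define A where "A = pairs_at P v \<union> pairs_at P w1"
    have "5 \<le> card A"
      unfolding A_def using card_pairs_at_Un[OF P finP w12(3)] deg[OF v] deg[OF w12(1)] by simp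
    moreover have "A \<inter> pairs_at P w2 \<subseteq> {{v, w2}, {w1, w2}}"
      unfolding A_def using pairs_at_Int[OF P w12(4)] pairs_at_Int[OF P w(2)] by (auto simp: Int_Un_distrib2)
    then have "card (A \<inter> pairs_at P w2) \<le> 2"
      by (rule card_mono[rotated, THEN order.trans]) (auto simp: card_insert_if)
    moreover have "card A + card (pairs_at P w2) = card (A \<union> pairs_at P w2) + card (A \<inter> pairs_at P w2)"
      using finP unfolding A_def pairs_at_def by (intro card_Un_Int) auto
    moreover have "card (A \<union> pairs_at P w2) \<le> card P"
      unfolding A_def by (intro card_mono[OF finP]) (auto simp: pairs_at_def)
    ultimately show False using card_P True deg[OF w12(2)] by simp
  qed
qed

lemma card_set_mset_le_size: "card (set_mset M) \<le> size M"
  by (induction M) (auto simp: card_insert_if)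

type_synonym pair_feature = "(nat \<Rightarrow> nat \<Rightarrow> real) \<Rightarrow> nat \<Rightarrow> nat \<Rightarrow> real"

text \<open>Homomorphism polynomials of patterns whose edges \<open>(r, s, L)\<close> carry pair features: the
  edge contributes \<open>L X (\<phi> r) (\<phi> s)\<close> instead of \<open>X (\<phi> r) (\<phi> s)\<close>.\<close>

definition labelled_hom :: "nat \<Rightarrow> nat set \<Rightarrow> (nat \<times> nat \<times> pair_feature) multiset \<Rightarrow> nat \<Rightarrow> nat \<Rightarrow> pair_feature" where
  "labelled_hom n W E a b X i j = (\<Sum>\<phi>\<in>{\<phi>\<in>PiE W (\<lambda>_. {..<n}). \<phi> a = i \<and> \<phi> b = j}.
       \<Prod>e\<in>#E. snd (snd e) X (\<phi> (fst e)) (\<phi> (fst (snd e))))"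

definition edge_pairs :: "(nat \<times> nat \<times> pair_feature) multiset \<Rightarrow> nat set set" where
  "edge_pairs E = (\<lambda>e. {fst e, fst (snd e)}) ` {e\<in>set_mset E. fst e \<noteq> fst (snd e)}"

definition incident :: "nat \<Rightarrow> nat \<times> nat \<times> pair_feature \<Rightarrow> bool" where
  "incident v e \<longleftrightarrow> fst e = v \<or> fst (snd e) = v"

lemma finite_edge_pairs: "finite (edge_pairs E)"
  unfolding edge_pairs_def by simp

lemma card_edge_pairs_le: "card (edge_pairs E) \<le> size E"
proof -
  have "card (edge_pairs E) \<le> card {e\<in>set_mset E. fst e \<noteq> fst (snd e)}"
    unfolding edge_pairs_def by (rule card_image_le) simp
  also have "\<dots> \<le> card (set_mset E)" by (rule card_mono) auto
  finally show ?thesis using card_set_mset_le_size[of E] by linarith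
qed

lemma proper_edge_pairs:
  "\<forall>e\<in>#E. fst e \<in> W \<and> fst (snd e) \<in> W \<Longrightarrow> proper_pairs W (edge_pairs E)"
  unfolding proper_pairs_def edge_pairs_def by fastforce

lemma sum_PiE_insert:
  assumes "v \<notin> W" "finite S" "finite W"
  shows "(\<Sum>\<phi>\<in>PiE (insert v W) (\<lambda>_. S). F \<phi>) = (\<Sum>\<psi>\<in>PiE W (\<lambda>_. S). \<Sum>k\<in>S. F (\<psi>(v := k)))"
proof -
  have "(\<Sum>\<phi>\<in>PiE (insert v W) (\<lambda>_. S). F \<phi>) = (\<Sum>z\<in>S \<times> PiE W (\<lambda>_. S). F ((\<lambda>(y, g). g(v := y)) z))"
    unfolding PiE_insert_eq by (subst sum.reindex[OF inj_combinator[OF assms(1)]]) (simp add: o_def)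
  also have "\<dots> = (\<Sum>k\<in>S. \<Sum>\<psi>\<in>PiE W (\<lambda>_. S). F (\<psi>(v := k)))"
    unfolding sum.cartesian_product by (simp add: split_def)
  also have "\<dots> = (\<Sum>\<psi>\<in>PiE W (\<lambda>_. S). \<Sum>k\<in>S. F (\<psi>(v := k)))"
    by (rule sum.swap)
  finally show ?thesis .
qed

lemma labelled_hom_two_vertices:
  assumes W: "W = {a, b}" and ij: "i < n" "j < n" "\<not> (a = b \<and> i \<noteq> j)"
    and ends: "\<forall>e\<in>#E. fst e \<in> W \<and> fst (snd e) \<in> W"
  shows "labelled_hom n W E a b X i j =
     (\<Prod>e\<in>#E. snd (snd e) X (if fst e = a then i else j) (if fst (snd e) = a then i else j))"
proof -
  define \<phi>0 where "\<phi>0 z = (if z = a then i else if z = b then j else undefined)" for z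
  have "{\<phi>\<in>PiE W (\<lambda>_. {..<n}). \<phi> a = i \<and> \<phi> b = j} = {\<phi>0}"
    unfolding \<phi>0_def W using ij by (auto simp: PiE_def extensional_def fun_eq_iff)
  moreover have "(\<Prod>e\<in>#E. snd (snd e) X (\<phi>0 (fst e)) (\<phi>0 (fst (snd e)))) =
     (\<Prod>e\<in>#E. snd (snd e) X (if fst e = a then i else j) (if fst (snd e) = a then i else j))"
  proof (rule arg_cong[where f = prod_mset], rule image_mset_cong)
    fix e assume "e \<in># E"
    then have "fst e \<in> {a, b}" "fst (snd e) \<in> {a, b}" using ends W by auto
    then show "snd (snd e) X (\<phi>0 (fst e)) (\<phi>0 (fst (snd e))) =
       snd (snd e) X (if fst e = a then i else j) (if fst (snd e) = a then i else j)"
      unfolding \<phi>0_def using ij(3) by auto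
  qed
  ultimately show ?thesis unfolding labelled_hom_def by simp
qed

lemma ppgn_extend_two_vertex_pattern:
  assumes W: "W = {a, b}" and ends: "\<forall>e\<in>#E. fst e \<in> W \<and> fst (snd e) \<in> W"
    and Z: "ideal_ppgn n d Z" and labels: "\<forall>e\<in>#E. ppgn_computes n Z d (snd (snd e))"
  shows "\<exists>Z' d'. ppgn_extends n Z d Z' d' \<and> ppgn_computes n Z' d' (labelled_hom n W E a b)"
proof -
  define H where "H e X x y = snd (snd e) X (if fst e = a then x else y) (if fst (snd e) = a then x else y)"
    for e :: "nat \<times> nat \<times> pair_feature" and X x y
  obtain Z1 d1 where Z1: "ppgn_extends n Z d Z1 d1" "\<forall>e\<in>#E. ppgn_computes n Z1 d1 (H e)"
    using ppgn_extend_each[OF Z labels, of H] ppgn_extend_select unfolding H_def by blast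
  obtain Z2 d2 where Z2: "ppgn_extends n Z1 d1 Z2 d2" "ppgn_computes n Z2 d2 (\<lambda>X x y. \<Prod>e\<in>#E. H e X x y)"
    using ppgn_extend_prod_mset[OF ppgn_extends_ideal[OF Z1(1)] Z1(2)] by blast
  obtain Z3 d3 where Z3: "ppgn_extends n Z2 d2 Z3 d3"
    "ppgn_computes n Z3 d3 (\<lambda>X i j. if i = j then 1 else (if a = b then 0 else 1))"
    using ppgn_extend_diag_const[OF ppgn_extends_ideal[OF Z2(1)]] by blast
  obtain Z4 d4 where Z4: "ppgn_extends n Z3 d3 Z4 d4" "ppgn_computes n Z4 d4
      (\<lambda>X x y. (if x = y then 1 else (if a = b then 0 else 1)) * (\<Prod>e\<in>#E. H e X x y))"
    using ppgn_extend_map2[OF ppgn_extends_ideal[OF Z3(1)] Z3(2) ppgn_extends_computes[OF Z3(1) Z2(2)],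
        where F = "(*)"] by blast
  have "labelled_hom n W E a b X x y = (if x = y then 1 else (if a = b then 0 else 1)) * (\<Prod>e\<in>#E. H e X x y)"
    if "x < n" "y < n" for X x y
  proof (cases "a = b \<and> x \<noteq> y")
    case True
    then have empty: "{\<phi>\<in>PiE W (\<lambda>_. {..<n}). \<phi> a = x \<and> \<phi> b = y} = {}" by auto
    show ?thesis unfolding labelled_hom_def empty using True by simp
  next
    case False
    then show ?thesis using labelled_hom_two_vertices[OF W that False ends] unfolding H_def by auto
  qed
  then have "ppgn_computes n Z4 d4 (labelled_hom n W E a b)"
    by (intro ppgn_computes_cong[OF Z4(2)]) auto
  then show ?thesis
    using ppgn_extends_trans[OF Z1(1) ppgn_extends_trans[OF Z2(1) ppgn_extends_trans[OF Z3(1) Z4(1)]]] by blast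
qed

definition avoiding :: "nat \<Rightarrow> (nat \<times> nat \<times> pair_feature) multiset \<Rightarrow> (nat \<times> nat \<times> pair_feature) multiset" where
  "avoiding v E = filter_mset (\<lambda>e. \<not> incident v e) E"

definition left_edges :: "nat \<Rightarrow> nat \<Rightarrow> nat \<Rightarrow> (nat \<times> nat \<times> pair_feature) multiset
    \<Rightarrow> (nat \<times> nat \<times> pair_feature) multiset" where
  "left_edges v u w E = filter_mset (\<lambda>e. incident v e \<and> \<not> (u \<noteq> w \<and> incident w e)) E"

definition right_edges :: "nat \<Rightarrow> nat \<Rightarrow> nat \<Rightarrow> (nat \<times> nat \<times> pair_feature) multiset
    \<Rightarrow> (nat \<times> nat \<times> pair_feature) multiset" where
  "right_edges v u w E = filter_mset (\<lambda>e. incident v e \<and> u \<noteq> w \<and> incident w e) E"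

definition star_product :: "nat \<Rightarrow> (nat \<times> nat \<times> pair_feature) multiset \<Rightarrow> (nat \<Rightarrow> nat \<Rightarrow> real) \<Rightarrow> nat \<Rightarrow> nat \<Rightarrow> real" where
  "star_product v M X x k = (\<Prod>e\<in>#M. snd (snd e) X (if fst e = v then k else x) (if fst (snd e) = v then k else x))"

text \<open>If all edges at \<open>v\<close> go to \<open>u\<close> or \<open>w\<close>, summing over the image \<open>k\<close> of \<open>v\<close> merges them into
  one edge \<open>(u, w)\<close> whose label is a matrix product: this is the step PPGN++ can perform.\<close>

definition eliminated_label :: "nat \<Rightarrow> nat \<Rightarrow> nat \<Rightarrow> nat \<Rightarrow> (nat \<times> nat \<times> pair_feature) multiset \<Rightarrow> pair_feature" where
  "eliminated_label n v u w E X x y =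
     (\<Sum>k<n. star_product v (left_edges v u w E) X x k * star_product v (right_edges v u w E) X y k)"

lemma edges_split: "E = left_edges v u w E + right_edges v u w E + avoiding v E"
  by (rule multiset_eqI) (auto simp: left_edges_def right_edges_def avoiding_def)

lemma star_product_update:
  assumes "\<forall>e\<in>#M. fst e \<in> {v, u} \<and> fst (snd e) \<in> {v, u}" "u \<noteq> v"
  shows "(\<Prod>e\<in>#M. snd (snd e) X ((\<psi>(v := k)) (fst e)) ((\<psi>(v := k)) (fst (snd e)))) = star_product v M X (\<psi> u) k"
  unfolding star_product_def using assms by (intro arg_cong[where f = prod_mset] image_mset_cong) auto

lemma prod_eliminate_vertex:
  assumes uw: "u \<noteq> v" "w \<noteq> v"
    and nb: "\<forall>e\<in>#E. incident v e \<longrightarrow> fst e \<in> {v, u, w} \<and> fst (snd e) \<in> {v, u, w}"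
  shows "(\<Sum>k<n. \<Prod>e\<in>#E. snd (snd e) X ((\<psi>(v := k)) (fst e)) ((\<psi>(v := k)) (fst (snd e)))) =
    (\<Prod>e\<in>#avoiding v E + {#(u, w, eliminated_label n v u w E)#}. snd (snd e) X (\<psi> (fst e)) (\<psi> (fst (snd e))))"
proof -
  have "\<forall>e\<in>#left_edges v u w E. fst e \<in> {v, u} \<and> fst (snd e) \<in> {v, u}"
    using nb uw unfolding left_edges_def incident_def by auto
  then have L: "(\<Prod>e\<in>#left_edges v u w E. snd (snd e) X ((\<psi>(v := k)) (fst e)) ((\<psi>(v := k)) (fst (snd e))))
      = star_product v (left_edges v u w E) X (\<psi> u) k" for k
    using star_product_update uw by blast
  have "\<forall>e\<in>#right_edges v u w E. fst e \<in> {v, w} \<and> fst (snd e) \<in> {v, w}"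
    using uw unfolding right_edges_def incident_def by auto
  then have R: "(\<Prod>e\<in>#right_edges v u w E. snd (snd e) X ((\<psi>(v := k)) (fst e)) ((\<psi>(v := k)) (fst (snd e))))
      = star_product v (right_edges v u w E) X (\<psi> w) k" for k
    using star_product_update uw by blast
  have A: "(\<Prod>e\<in>#avoiding v E. snd (snd e) X ((\<psi>(v := k)) (fst e)) ((\<psi>(v := k)) (fst (snd e))))
      = (\<Prod>e\<in>#avoiding v E. snd (snd e) X (\<psi> (fst e)) (\<psi> (fst (snd e))))" for k
    unfolding avoiding_def incident_def by (intro arg_cong[where f = prod_mset] image_mset_cong) auto
  have "(\<Prod>e\<in>#E. snd (snd e) X ((\<psi>(v := k)) (fst e)) ((\<psi>(v := k)) (fst (snd e)))) =
      star_product v (left_edges v u w E) X (\<psi> u) k * star_product v (right_edges v u w E) X (\<psi> w) k *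
      (\<Prod>e\<in>#avoiding v E. snd (snd e) X (\<psi> (fst e)) (\<psi> (fst (snd e))))" for k
    by (subst edges_split[of E v u w]) (simp only: image_mset_union prod_mset.union L R A)
  then show ?thesis unfolding eliminated_label_def by (simp add: sum_distrib_left ac_simps)
qed

lemma labelled_hom_eliminate:
  assumes finW: "finite W" and v: "v \<in> W" and ab: "a \<in> W - {v}" "b \<in> W - {v}"
    and uw: "u \<in> W - {v}" "w \<in> W - {v}"
    and nb: "\<forall>e\<in>#E. incident v e \<longrightarrow> fst e \<in> {v, u, w} \<and> fst (snd e) \<in> {v, u, w}"
  shows "labelled_hom n W E a b X i j =
           labelled_hom n (W - {v}) (avoiding v E + {#(u, w, eliminated_label n v u w E)#}) a b X i j"
proof -
  define W' where "W' = W - {v}"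
  have W: "W = insert v W'" "v \<notin> W'" "finite W'" using v finW unfolding W'_def by auto
  define E' where "E' = avoiding v E + {#(u, w, eliminated_label n v u w E)#}"
  define P where "P E \<phi> = (\<Prod>e\<in>#E. snd (snd e) X (\<phi> (fst e)) (\<phi> (fst (snd e))))"
    for E :: "(nat \<times> nat \<times> pair_feature) multiset" and \<phi> :: "nat \<Rightarrow> nat"
  have finP: "finite (PiE W (\<lambda>_. {..<n}))" "finite (PiE W' (\<lambda>_. {..<n}))"
    using W finW by (auto intro: finite_PiE)
  have "labelled_hom n W E a b X i j = (\<Sum>\<phi>\<in>PiE W (\<lambda>_. {..<n}). if \<phi> a = i \<and> \<phi> b = j then P E \<phi> else 0)"
    unfolding labelled_hom_def P_def by (rule sum.inter_filter[OF finP(1)])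
  also have "\<dots> = (\<Sum>\<psi>\<in>PiE W' (\<lambda>_. {..<n}). \<Sum>k<n.
      if (\<psi>(v := k)) a = i \<and> (\<psi>(v := k)) b = j then P E (\<psi>(v := k)) else 0)"
    unfolding W(1) by (rule sum_PiE_insert) (use W in auto)
  also have "\<dots> = (\<Sum>\<psi>\<in>PiE W' (\<lambda>_. {..<n}). if \<psi> a = i \<and> \<psi> b = j then P E' \<psi> else 0)"
    using ab prod_eliminate_vertex[OF _ _ nb] uw unfolding P_def E'_def by (intro sum.cong) auto
  also have "\<dots> = labelled_hom n W' E' a b X i j"
    unfolding labelled_hom_def P_def by (rule sum.inter_filter[OF finP(2), symmetric])
  finally show ?thesis unfolding W'_def E'_def .
qed

lemma ppgn_extend_star_product:
  assumes "ideal_ppgn n d Z" "\<forall>e\<in>#M. ppgn_computes n Z d (snd (snd e))"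
  shows "\<exists>Z' d'. ppgn_extends n Z d Z' d' \<and> ppgn_computes n Z' d' (\<lambda>X k y. star_product v M X y k)"
proof -
  define H where "H e X k y = snd (snd e) X (if fst e = v then k else y) (if fst (snd e) = v then k else y)"
    for e :: "nat \<times> nat \<times> pair_feature" and X k y
  obtain Z1 d1 where Z1: "ppgn_extends n Z d Z1 d1" "\<forall>e\<in>#M. ppgn_computes n Z1 d1 (H e)"
    using ppgn_extend_each[OF assms, of H] ppgn_extend_select unfolding H_def by blast
  then show ?thesis
    using ppgn_extend_prod_mset[OF ppgn_extends_ideal[OF Z1(1)] Z1(2)] ppgn_extends_trans[OF Z1(1)]
    unfolding star_product_def H_def by blast
qed

lemma ppgn_extend_eliminated_label:
  assumes Z: "ideal_ppgn n d Z" and labels: "\<forall>e\<in>#E. ppgn_computes n Z d (snd (snd e))"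
  shows "\<exists>Z' d'. ppgn_extends n Z d Z' d' \<and> ppgn_computes n Z' d' (eliminated_label n v u w E)"
proof -
  have "\<forall>e\<in>#left_edges v u w E. ppgn_computes n Z d (snd (snd e))"
    using labels unfolding left_edges_def by auto
  then obtain Z1 d1 where Z1: "ppgn_extends n Z d Z1 d1"
    "ppgn_computes n Z1 d1 (\<lambda>X k x. star_product v (left_edges v u w E) X x k)"
    using ppgn_extend_star_product[OF Z] by blast
  obtain Z2 d2 where Z2: "ppgn_extends n Z1 d1 Z2 d2"
    "ppgn_computes n Z2 d2 (\<lambda>X x k. star_product v (left_edges v u w E) X x k)"
    using ppgn_extend_transpose[OF ppgn_extends_ideal[OF Z1(1)] Z1(2)] by blast
  have "\<forall>e\<in>#right_edges v u w E. ppgn_computes n Z2 d2 (snd (snd e))"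
    using labels ppgn_extends_computes[OF ppgn_extends_trans[OF Z1(1) Z2(1)]] unfolding right_edges_def by auto
  then obtain Z3 d3 where Z3: "ppgn_extends n Z2 d2 Z3 d3"
    "ppgn_computes n Z3 d3 (\<lambda>X k y. star_product v (right_edges v u w E) X y k)"
    using ppgn_extend_star_product[OF ppgn_extends_ideal[OF Z2(1)]] by blast
  obtain Z4 d4 where "ppgn_extends n Z3 d3 Z4 d4" "ppgn_computes n Z4 d4 (eliminated_label n v u w E)"
    using ppgn_extend_matmul[OF ppgn_extends_ideal[OF Z3(1)] ppgn_extends_computes[OF Z3(1) Z2(2)] Z3(2)]
    unfolding eliminated_label_def[abs_def] by blast
  then show ?thesis
    using ppgn_extends_trans[OF Z1(1) ppgn_extends_trans[OF Z2(1) ppgn_extends_trans[OF Z3(1)]]] by blast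
qed

lemma two_element_cover:
  assumes "finite N" "card N \<le> 2" "N \<subseteq> S" "s \<in> S"
  obtains u w where "u \<in> S" "w \<in> S" "N \<subseteq> {u, w}" "u \<noteq> w \<Longrightarrow> u \<in> N \<and> w \<in> N"
proof (cases "card N")
  case 0 then show ?thesis using that[of s s] assms by auto
next
  case (Suc k)
  show ?thesis
  proof (cases k)
    case 0
    then obtain x where "N = {x}" using Suc card_1_singletonE by auto
    then show ?thesis using that[of x x] assms by auto
  next
    case (Suc k')
    then have "card N = 2" using assms(2) \<open>card N = Suc k\<close> by simp
    then obtain x y where "N = {x, y}" "x \<noteq> y" by (meson card_2_iff)
    then show ?thesis using that[of x y] assms by auto
  qed
qed

lemma elimination_partners:
  assumes ends: "\<forall>e\<in>#E. fst e \<in> W \<and> fst (snd e) \<in> W" and fin: "finite W"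
    and a: "a \<in> W - {v}" and few: "card (pairs_at (edge_pairs E) v) \<le> 2"
  obtains u w where "u \<in> W - {v}" "w \<in> W - {v}"
    "\<forall>e\<in>#E. incident v e \<longrightarrow> fst e \<in> {v, u, w} \<and> fst (snd e) \<in> {v, u, w}"
    "u \<noteq> w \<Longrightarrow> {v, u} \<in> edge_pairs E \<and> {v, w} \<in> edge_pairs E"
proof -
  define N where "N = {x \<in> W - {v}. {v, x} \<in> edge_pairs E}"
  have finN: "finite N" unfolding N_def using fin by simp
  have inj: "inj_on (\<lambda>x. {v, x}) N" unfolding N_def by (auto intro!: inj_onI simp: doubleton_eq_iff)
  have "finite (pairs_at (edge_pairs E) v)" using finite_edge_pairs unfolding pairs_at_def by simp
  moreover have "(\<lambda>x. {v, x}) ` N \<subseteq> pairs_at (edge_pairs E) v" unfolding N_def pairs_at_def by auto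
  ultimately have "card ((\<lambda>x. {v, x}) ` N) \<le> card (pairs_at (edge_pairs E) v)" by (rule card_mono)
  then have "card N \<le> 2" using few card_image[OF inj] by simp
  have inc: "fst e \<in> insert v N \<and> fst (snd e) \<in> insert v N" if "e \<in># E" "incident v e" for e
  proof (cases "fst e = fst (snd e)")
    case True then show ?thesis using that unfolding incident_def by auto
  next
    case False
    then have "{fst e, fst (snd e)} \<in> edge_pairs E" using that unfolding edge_pairs_def by auto
    then show ?thesis using that ends False unfolding incident_def N_def by (auto simp: insert_commute)
  qed
  obtain u w where uw: "u \<in> W - {v}" "w \<in> W - {v}" "N \<subseteq> {u, w}" "u \<noteq> w \<Longrightarrow> u \<in> N \<and> w \<in> N"
  proof -
    have "N \<subseteq> W - {v}" unfolding N_def by auto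
    then show ?thesis using two_element_cover[OF finN \<open>card N \<le> 2\<close> _ a] that by blast
  qed
  show ?thesis
  proof (rule that[OF uw(1,2)])
    show "\<forall>e\<in>#E. incident v e \<longrightarrow> fst e \<in> {v, u, w} \<and> fst (snd e) \<in> {v, u, w}"
      using inc uw(3) by blast
    show "{v, u} \<in> edge_pairs E \<and> {v, w} \<in> edge_pairs E" if "u \<noteq> w"
      using uw(4)[OF that] unfolding N_def by auto
  qed
qed

lemma card_edge_pairs_eliminate:
  assumes "u \<noteq> w \<Longrightarrow> {v, u} \<in> edge_pairs E \<and> {v, w} \<in> edge_pairs E" "u \<noteq> v" "w \<noteq> v"
  shows "card (edge_pairs (avoiding v E + {#(u, w, M)#})) \<le> card (edge_pairs E)"
proof -
  let ?S = "edge_pairs E" and ?Sv = "pairs_at (edge_pairs E) v"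
  let ?new = "if u \<noteq> w then {{u, w}} else {}"
  have sub: "edge_pairs (avoiding v E + {#(u, w, M)#}) \<subseteq> (?S - ?Sv) \<union> ?new"
  proof
    fix p assume "p \<in> edge_pairs (avoiding v E + {#(u, w, M)#})"
    then obtain e where e: "e \<in># avoiding v E + {#(u, w, M)#}" "fst e \<noteq> fst (snd e)" "p = {fst e, fst (snd e)}"
      unfolding edge_pairs_def by auto
    show "p \<in> (?S - ?Sv) \<union> ?new"
    proof (cases "e = (u, w, M)")
      case True then show ?thesis using e by auto
    next
      case False
      then have "e \<in># E" "\<not> incident v e" using e(1) unfolding avoiding_def by auto
      then have "p \<in> ?S" "v \<notin> p" using e unfolding edge_pairs_def incident_def by auto
      then show ?thesis unfolding pairs_at_def by auto
    qed
  qed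
  have Sv: "?Sv \<subseteq> ?S" unfolding pairs_at_def by auto
  have fin: "finite ?S" "finite ?Sv" using finite_edge_pairs Sv finite_subset by blast+
  have "card (edge_pairs (avoiding v E + {#(u, w, M)#})) \<le> card ((?S - ?Sv) \<union> ?new)"
    by (rule card_mono[OF _ sub]) (use fin in simp)
  also have "\<dots> \<le> card (?S - ?Sv) + card ?new" by (rule card_Un_le)
  also have "card (?S - ?Sv) = card ?S - card ?Sv" by (rule card_Diff_subset[OF fin(2) Sv])
  finally have c: "card (edge_pairs (avoiding v E + {#(u, w, M)#})) \<le> card ?S - card ?Sv + card ?new" .
  have "card ?Sv \<le> card ?S" by (rule card_mono[OF fin(1) Sv])
  moreover have "2 \<le> card ?Sv" if uw: "u \<noteq> w"
  proof -
    have "{{v, u}, {v, w}} \<subseteq> ?Sv" using assms(1)[OF uw] unfolding pairs_at_def by auto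
    then have "card {{v, u}, {v, w}} \<le> card ?Sv" by (rule card_mono[OF fin(2)])
    moreover have "card {{v, u}, {v, w}} = 2" using uw by (auto simp: doubleton_eq_iff)
    ultimately show ?thesis by simp
  qed
  ultimately show ?thesis using c by (cases "u = w") auto
qed

lemma ppgn_eliminate_vertex:
  assumes fin: "finite W" and v: "v \<in> W - {a, b}" and ab: "a \<in> W" "b \<in> W"
    and ends: "\<forall>e\<in>#E. fst e \<in> W \<and> fst (snd e) \<in> W"
    and few: "card (pairs_at (edge_pairs E) v) \<le> 2"
    and Z: "ideal_ppgn n d Z" and labels: "\<forall>e\<in>#E. ppgn_computes n Z d (snd (snd e))"
  obtains Z1 d1 E' where "ppgn_extends n Z d Z1 d1"
    "\<forall>e\<in>#E'. fst e \<in> W - {v} \<and> fst (snd e) \<in> W - {v}"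
    "card (edge_pairs E') \<le> card (edge_pairs E)"
    "\<forall>e\<in>#E'. ppgn_computes n Z1 d1 (snd (snd e))"
    "\<And>X i j. labelled_hom n W E a b X i j = labelled_hom n (W - {v}) E' a b X i j"
proof -
  have av: "a \<in> W - {v}" "b \<in> W - {v}" using v ab by auto
  obtain u w where uw: "u \<in> W - {v}" "w \<in> W - {v}"
    "\<forall>e\<in>#E. incident v e \<longrightarrow> fst e \<in> {v, u, w} \<and> fst (snd e) \<in> {v, u, w}"
    "u \<noteq> w \<Longrightarrow> {v, u} \<in> edge_pairs E \<and> {v, w} \<in> edge_pairs E"
    using elimination_partners[OF ends fin av(1) few] by blast
  obtain Z1 d1 where Z1: "ppgn_extends n Z d Z1 d1" "ppgn_computes n Z1 d1 (eliminated_label n v u w E)"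
    using ppgn_extend_eliminated_label[OF Z labels] by blast
  define E' where "E' = avoiding v E + {#(u, w, eliminated_label n v u w E)#}"
  show ?thesis
  proof (rule that[OF Z1(1)])
    show "\<forall>e\<in>#E'. fst e \<in> W - {v} \<and> fst (snd e) \<in> W - {v}"
      using ends uw unfolding E'_def avoiding_def incident_def by auto
    show "card (edge_pairs E') \<le> card (edge_pairs E)"
      unfolding E'_def using uw by (intro card_edge_pairs_eliminate) auto
    show "\<forall>e\<in>#E'. ppgn_computes n Z1 d1 (snd (snd e))"
      using Z1 ppgn_extends_computes[OF Z1(1)] labels unfolding E'_def avoiding_def by auto
    show "labelled_hom n W E a b X i j = labelled_hom n (W - {v}) E' a b X i j" for X i j
      unfolding E'_def using labelled_hom_eliminate[OF fin _ av uw(1-3)] v by blast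
  qed
qed

lemma ppgn_computes_labelled_hom:
  assumes "finite W" "a \<in> W" "b \<in> W" "\<forall>e\<in>#E. fst e \<in> W \<and> fst (snd e) \<in> W"
    "card (edge_pairs E) \<le> (if a = b then 5 else 4)"
    "ideal_ppgn n d Z" "\<forall>e\<in>#E. ppgn_computes n Z d (snd (snd e))"
  shows "\<exists>Z' d'. ppgn_extends n Z d Z' d' \<and> ppgn_computes n Z' d' (labelled_hom n W E a b)"
  using assms
proof (induction W arbitrary: E Z d rule: finite_remove_induct)
  case empty then show ?case by simp
next
  case (remove W)
  show ?case
  proof (cases "W - {a, b} = {}")
    case True
    then have "W = {a, b}" using remove.prems by auto
    then show ?thesis using ppgn_extend_two_vertex_pattern remove.prems by blast
  next
    case False
    obtain v where v: "v \<in> W - {a, b}" "card (pairs_at (edge_pairs E) v) \<le> 2"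
      using exists_vertex_few_pairs[OF remove.hyps(1) remove.prems(1,2) proper_edge_pairs[OF remove.prems(3)]
          remove.prems(4) False] by blast
    obtain Z1 d1 E' where Z1: "ppgn_extends n Z d Z1 d1"
      "\<forall>e\<in>#E'. fst e \<in> W - {v} \<and> fst (snd e) \<in> W - {v}"
      "card (edge_pairs E') \<le> card (edge_pairs E)"
      "\<forall>e\<in>#E'. ppgn_computes n Z1 d1 (snd (snd e))"
      "\<And>X i j. labelled_hom n W E a b X i j = labelled_hom n (W - {v}) E' a b X i j"
      using ppgn_eliminate_vertex[OF remove.hyps(1) v(1) remove.prems(1,2,3) v(2) remove.prems(5,6)] by blast
    have "\<exists>Z' d'. ppgn_extends n Z1 d1 Z' d' \<and> ppgn_computes n Z' d' (labelled_hom n (W - {v}) E' a b)"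
      by (rule remove.IH) (use v remove.prems Z1(2-4) ppgn_extends_ideal[OF Z1(1)] in auto)
    then obtain Z2 d2 where "ppgn_extends n Z1 d1 Z2 d2" "ppgn_computes n Z2 d2 (labelled_hom n (W - {v}) E' a b)"
      by blast
    moreover from this(2) have "ppgn_computes n Z2 d2 (labelled_hom n W E a b)"
      by (rule ppgn_computes_cong) (simp add: Z1(5))
    ultimately show ?thesis using ppgn_extends_trans[OF Z1(1)] by blast
  qed
qed

definition adjacency_labels :: "(nat \<times> nat) multiset \<Rightarrow> (nat \<times> nat \<times> pair_feature) multiset" where
  "adjacency_labels E = image_mset (\<lambda>(r, s). (r, s, \<lambda>X. X)) E"

lemma hom_poly_labelled_hom:
  assumes "\<not> (a = b \<and> i \<noteq> j)"
  shows "hom_poly n m E a b X i j = labelled_hom n {..<m} (adjacency_labels E) a b X i j"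
proof -
  have "(\<Prod>e\<in>#adjacency_labels E. snd (snd e) X (\<phi> (fst e)) (\<phi> (fst (snd e)))) =
        prod_mset (image_mset (\<lambda>e. X (\<phi> (fst e)) (\<phi> (snd e))) E)" for \<phi>
    unfolding adjacency_labels_def by (simp add: image_mset.compositionality o_def case_prod_beta)
  then show ?thesis unfolding hom_poly_def labelled_hom_def by (simp only: if_not_P[OF assms])
qed

lemma ppgn_hom_poly:
  assumes "continuous_on UNIV \<sigma>" "non_polynomial \<sigma>"
    and H: "is_multigraph_output m E a b" and size: "size E \<le> (if a = b then 5 else 4)"
  shows "\<exists>F. ppgn \<sigma> n F \<and>
    (\<forall>X\<in>simple_adj n. \<forall>i<n. \<forall>j<n. \<not> (a = b \<and> i \<noteq> j) \<longrightarrow> F X i j = hom_poly n m E a b X i j)"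
proof -
  define Z0 where "Z0 = (\<lambda>(X::nat\<Rightarrow>nat\<Rightarrow>real) (i::nat) (j::nat) (c::nat). if c = 0 then X i j else (0::real))"
  have Z0: "ideal_ppgn n 1 Z0" unfolding Z0_def by (rule ideal_ppgn_init)
  have "\<forall>e\<in>#adjacency_labels E. ppgn_computes n Z0 1 (snd (snd e))"
    unfolding adjacency_labels_def ppgn_computes_def Z0_def by auto
  moreover have "\<forall>e\<in>#adjacency_labels E. fst e \<in> {..<m} \<and> fst (snd e) \<in> {..<m}"
    using H unfolding adjacency_labels_def is_multigraph_output_def by auto
  moreover have "card (edge_pairs (adjacency_labels E)) \<le> (if a = b then 5 else 4)"
    using card_edge_pairs_le[of "adjacency_labels E"] size unfolding adjacency_labels_def by simp
  ultimately obtain Z' d' where Z': "ppgn_extends n Z0 1 Z' d'"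
    "ppgn_computes n Z' d' (labelled_hom n {..<m} (adjacency_labels E) a b)"
    using ppgn_computes_labelled_hom[OF finite_lessThan _ _ _ _ Z0] H
    unfolding is_multigraph_output_def by blast
  then obtain F where "ppgn \<sigma> n F"
    "\<forall>X\<in>simple_adj n. \<forall>i<n. \<forall>j<n. F X i j = labelled_hom n {..<m} (adjacency_labels E) a b X i j"
    using ppgn_realise[OF assms(1,2) ppgn_extends_ideal[OF Z'(1)]] by blast
  then show ?thesis using hom_poly_labelled_hom by metis
qed

section \<open>Idealised MPNN and vertex elimination\<close>

inductive ideal_mpnn :: "nat \<Rightarrow> nat \<Rightarrow> ((nat \<Rightarrow> nat \<Rightarrow> real) \<Rightarrow> (nat \<Rightarrow> nat \<Rightarrow> real)) \<Rightarrow> bool" for n where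
  ideal_mpnn_init: "ideal_mpnn n 1 (\<lambda>X i c. if c = 0 then 1 else 0)"
| ideal_mpnn_step: "ideal_mpnn n d Y \<Longrightarrow> ideal_mpnn n d' (\<lambda>X i. m (truncate (3 * d) (mpnn_concat n d X (Y X) i)))"

lemma ideal_mpnn_realisable:
  assumes cont: "continuous_on UNIV \<sigma>" and np: "non_polynomial \<sigma>"
  shows "ideal_mpnn n d Y \<Longrightarrow> \<exists>Y'. mpnn_layers \<sigma> n d Y' \<and> (\<forall>X\<in>simple_adj n. \<forall>i<n. \<forall>c<d. Y' X i c = Y X i c)"
proof (induction rule: ideal_mpnn.induct)
  case ideal_mpnn_init
  show ?case by (rule exI, rule conjI, rule mpnn_init) auto
next
  case (ideal_mpnn_step d Y d' m)
  obtain Y' where Y': "mpnn_layers \<sigma> n d Y'" "\<forall>X\<in>simple_adj n. \<forall>i<n. \<forall>c<d. Y' X i c = Y X i c"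
    using ideal_mpnn_step.IH by blast
  define D where "D = (\<lambda>(X, i). truncate (3 * d) (mpnn_concat n d X (Y X) i)) ` (simple_adj n \<times> {..<n})"
  have finD: "finite D" unfolding D_def using finite_simple_adj by simp
  have resD: "\<forall>x\<in>D. \<forall>c\<ge>3 * d. x c = 0" unfolding D_def truncate_def by auto
  obtain f where f: "mlp \<sigma> (3 * d) d' f" "\<forall>x\<in>D. \<forall>c<d'. f x c = m x c"
    using mlp_interpolates[OF cont np finD resD] by blast
  define Y'' where "Y'' X i = f (mpnn_concat n d X (Y' X) i)" for X i
  have "mpnn_layers \<sigma> n d' Y''" unfolding Y''_def by (rule mpnn_step[OF Y'(1) f(1)])
  moreover have "Y'' X i c = m (truncate (3 * d) (mpnn_concat n d X (Y X) i)) c"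
    if X: "X \<in> simple_adj n" and i: "i < n" and c: "c < d'" for X i c
  proof -
    have r: "truncate (3 * d) (mpnn_concat n d X (Y' X) i) = truncate (3 * d) (mpnn_concat n d X (Y X) i)"
      by (rule truncate_cong) (use Y'(2) X i in \<open>auto simp: mpnn_concat_def intro!: sum.cong\<close>)
    have "Y'' X i c = f (truncate (3 * d) (mpnn_concat n d X (Y X) i)) c"
      unfolding Y''_def using mlp_truncate_input[OF f(1), of "mpnn_concat n d X (Y' X) i"] r by simp
    also have "\<dots> = m (truncate (3 * d) (mpnn_concat n d X (Y X) i)) c"
      using f(2) c X i unfolding D_def by auto
    finally show ?thesis .
  qed
  ultimately show ?case by blast
qed

definition mpnn_computes :: "nat \<Rightarrow> ((nat \<Rightarrow> nat \<Rightarrow> real) \<Rightarrow> (nat \<Rightarrow> nat \<Rightarrow> real)) \<Rightarrow> nat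
   \<Rightarrow> ((nat \<Rightarrow> nat \<Rightarrow> real) \<Rightarrow> nat \<Rightarrow> real) \<Rightarrow> bool" where
  "mpnn_computes n Y d g \<longleftrightarrow> (\<exists>c<d. \<forall>X\<in>simple_adj n. \<forall>i<n. Y X i c = g X i)"

definition mpnn_extends :: "nat \<Rightarrow> ((nat \<Rightarrow> nat \<Rightarrow> real) \<Rightarrow> (nat \<Rightarrow> nat \<Rightarrow> real)) \<Rightarrow> nat
   \<Rightarrow> ((nat \<Rightarrow> nat \<Rightarrow> real) \<Rightarrow> (nat \<Rightarrow> nat \<Rightarrow> real)) \<Rightarrow> nat \<Rightarrow> bool" where
  "mpnn_extends n Y d Y' d' \<longleftrightarrow> ideal_mpnn n d' Y' \<and> (\<forall>g. mpnn_computes n Y d g \<longrightarrow> mpnn_computes n Y' d' g)"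

lemma mpnn_extends_refl: "ideal_mpnn n d Y \<Longrightarrow> mpnn_extends n Y d Y d"
  unfolding mpnn_extends_def by auto

lemma mpnn_extends_trans:
  "mpnn_extends n Y d Y' d' \<Longrightarrow> mpnn_extends n Y' d' Y'' d'' \<Longrightarrow> mpnn_extends n Y d Y'' d''"
  unfolding mpnn_extends_def by auto

lemma mpnn_extends_ideal: "mpnn_extends n Y d Y' d' \<Longrightarrow> ideal_mpnn n d' Y'"
  unfolding mpnn_extends_def by auto

lemma mpnn_extends_computes: "mpnn_extends n Y d Y' d' \<Longrightarrow> mpnn_computes n Y d g \<Longrightarrow> mpnn_computes n Y' d' g"
  unfolding mpnn_extends_def by auto

lemma mpnn_computes_cong:
  "mpnn_computes n Y d g \<Longrightarrow> (\<forall>X\<in>simple_adj n. \<forall>i<n. g X i = g' X i) \<Longrightarrow> mpnn_computes n Y d g'"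
  unfolding mpnn_computes_def by auto

lemma mpnn_extend_layer:
  assumes "ideal_mpnn n d Y"
  shows "\<exists>Y' d'. mpnn_extends n Y d Y' d' \<and>
           mpnn_computes n Y' d' (\<lambda>X i. h (truncate (3 * d) (mpnn_concat n d X (Y X) i)))"
proof -
  define m where "m w = (\<lambda>c::nat. if c < d then w (c + 2 * d) else if c = d then h w else 0)" for w
  define Y' where "Y' X i = m (truncate (3 * d) (mpnn_concat n d X (Y X) i))" for X i
  have "ideal_mpnn n (Suc d) Y'" unfolding Y'_def by (rule ideal_mpnn_step[OF assms])
  moreover have "mpnn_extends n Y d Y' (Suc d)" unfolding mpnn_extends_def
  proof (intro conjI allI impI)
    fix g assume "mpnn_computes n Y d g"
    then obtain c where "c < d" "\<forall>X\<in>simple_adj n. \<forall>i<n. Y X i c = g X i" unfolding mpnn_computes_def by blast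
    then show "mpnn_computes n Y' (Suc d) g"
      unfolding mpnn_computes_def Y'_def m_def truncate_def mpnn_concat_def by (intro exI[of _ c]) auto
  qed fact
  moreover have "mpnn_computes n Y' (Suc d) (\<lambda>X i. h (truncate (3 * d) (mpnn_concat n d X (Y X) i)))"
    unfolding mpnn_computes_def Y'_def m_def by auto
  ultimately show ?thesis by blast
qed

lemma mpnn_extend_map2:
  assumes "ideal_mpnn n d Y" "mpnn_computes n Y d g1" "mpnn_computes n Y d g2"
  shows "\<exists>Y' d'. mpnn_extends n Y d Y' d' \<and> mpnn_computes n Y' d' (\<lambda>X i. F (g1 X i) (g2 X i))"
proof -
  obtain c1 where c1: "c1 < d" "\<forall>X\<in>simple_adj n. \<forall>i<n. Y X i c1 = g1 X i"
    using assms(2) unfolding mpnn_computes_def by blast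
  obtain c2 where c2: "c2 < d" "\<forall>X\<in>simple_adj n. \<forall>i<n. Y X i c2 = g2 X i"
    using assms(3) unfolding mpnn_computes_def by blast
  obtain Y' d' where Y': "mpnn_extends n Y d Y' d'" "mpnn_computes n Y' d' (\<lambda>X i.
      F (truncate (3 * d) (mpnn_concat n d X (Y X) i) (c1 + 2 * d))
        (truncate (3 * d) (mpnn_concat n d X (Y X) i) (c2 + 2 * d)))"
    using mpnn_extend_layer[OF assms(1), of "\<lambda>w. F (w (c1 + 2 * d)) (w (c2 + 2 * d))"] by blast
  have "mpnn_computes n Y' d' (\<lambda>X i. F (g1 X i) (g2 X i))"
    by (rule mpnn_computes_cong[OF Y'(2)]) (use c1 c2 in \<open>simp add: truncate_def mpnn_concat_def\<close>)
  then show ?thesis using Y'(1) by blast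
qed

lemma mpnn_extend_const:
  assumes "ideal_mpnn n d Y"
  shows "\<exists>Y' d'. mpnn_extends n Y d Y' d' \<and> mpnn_computes n Y' d' (\<lambda>X i. k)"
  using mpnn_extend_layer[OF assms, of "\<lambda>_. k"] by simp

lemma mpnn_extend_neighbour_sum:
  assumes "ideal_mpnn n d Y" "mpnn_computes n Y d g"
  shows "\<exists>Y' d'. mpnn_extends n Y d Y' d' \<and> mpnn_computes n Y' d' (\<lambda>X i. \<Sum>j<n. X i j * g X j)"
proof -
  obtain c1 where c1: "c1 < d" "\<forall>X\<in>simple_adj n. \<forall>i<n. Y X i c1 = g X i"
    using assms(2) unfolding mpnn_computes_def by blast
  obtain Y' d' where Y': "mpnn_extends n Y d Y' d'"
    "mpnn_computes n Y' d' (\<lambda>X i. truncate (3 * d) (mpnn_concat n d X (Y X) i) c1)"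
    using mpnn_extend_layer[OF assms(1), of "\<lambda>w. w c1"] by blast
  have "mpnn_computes n Y' d' (\<lambda>X i. \<Sum>j<n. X i j * g X j)"
    by (rule mpnn_computes_cong[OF Y'(2)]) (use c1 in \<open>simp add: truncate_def mpnn_concat_def\<close>)
  then show ?thesis using Y'(1) by blast
qed

lemma mpnn_extend_total_sum:
  assumes "ideal_mpnn n d Y" "mpnn_computes n Y d g"
  shows "\<exists>Y' d'. mpnn_extends n Y d Y' d' \<and> mpnn_computes n Y' d' (\<lambda>X i. \<Sum>j<n. g X j)"
proof -
  obtain c1 where c1: "c1 < d" "\<forall>X\<in>simple_adj n. \<forall>i<n. Y X i c1 = g X i"
    using assms(2) unfolding mpnn_computes_def by blast
  obtain Y' d' where Y': "mpnn_extends n Y d Y' d'"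
    "mpnn_computes n Y' d' (\<lambda>X i. truncate (3 * d) (mpnn_concat n d X (Y X) i) (c1 + d))"
    using mpnn_extend_layer[OF assms(1), of "\<lambda>w. w (c1 + d)"] by blast
  have "mpnn_computes n Y' d' (\<lambda>X i. \<Sum>j<n. g X j)"
    by (rule mpnn_computes_cong[OF Y'(2)]) (use c1 in \<open>simp add: truncate_def mpnn_concat_def\<close>)
  then show ?thesis using Y'(1) by blast
qed

type_synonym node_feature = "(nat \<Rightarrow> nat \<Rightarrow> real) \<Rightarrow> nat \<Rightarrow> real"

definition node_labelled_hom :: "nat \<Rightarrow> nat set \<Rightarrow> (nat \<times> nat) multiset \<Rightarrow> (nat \<Rightarrow> node_feature) \<Rightarrow> nat \<Rightarrow> node_feature" where
  "node_labelled_hom n W E N a X i = (\<Sum>\<phi>\<in>{\<phi>\<in>PiE W (\<lambda>_. {..<n}). \<phi> a = i}.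
       (\<Prod>v\<in>W. N v X (\<phi> v)) * (\<Prod>e\<in>#E. X (\<phi> (fst e)) (\<phi> (snd e))))"

definition plain_edge_pairs :: "(nat \<times> nat) multiset \<Rightarrow> nat set set" where
  "plain_edge_pairs E = (\<lambda>e. {fst e, snd e}) ` set_mset E"

definition incident_pair :: "nat \<Rightarrow> nat \<times> nat \<Rightarrow> bool" where
  "incident_pair v e \<longleftrightarrow> fst e = v \<or> snd e = v"

lemma prod_mset_const_01:
  assumes "M \<noteq> {#}" "\<forall>e\<in>#M. f e = t" "t = 0 \<or> t = (1::real)"
  shows "(\<Prod>e\<in>#M. f e) = t"
  using assms
proof (induction M)
  case empty then show ?case by simp
next
  case (add x M)
  show ?case
  proof (cases "M = {#}")
    case True then show ?thesis using add by simp
  next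
    case False then show ?thesis using add by auto
  qed
qed

lemma node_labelled_hom_remove_vertex:
  assumes finW: "finite W" and v: "v \<in> W" and a: "a \<in> W - {v}"
    and step: "\<And>\<psi>. \<psi> \<in> PiE (W - {v}) (\<lambda>_. {..<n}) \<Longrightarrow>
      (\<Sum>k<n. (\<Prod>v'\<in>W. N v' X ((\<psi>(v := k)) v')) * (\<Prod>e\<in>#E. X ((\<psi>(v := k)) (fst e)) ((\<psi>(v := k)) (snd e))))
        = (\<Prod>v'\<in>W - {v}. N' v' X (\<psi> v')) * (\<Prod>e\<in>#E'. X (\<psi> (fst e)) (\<psi> (snd e)))"
  shows "node_labelled_hom n W E N a X i = node_labelled_hom n (W - {v}) E' N' a X i"
proof -
  define W' where "W' = W - {v}"
  have W: "W = insert v W'" "v \<notin> W'" "finite W'" using v finW unfolding W'_def by auto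
  have finP: "finite (PiE W (\<lambda>_. {..<n}))" "finite (PiE W' (\<lambda>_. {..<n}))"
    using W finW by (auto intro: finite_PiE)
  define P where "P \<phi> = (\<Prod>v'\<in>W. N v' X (\<phi> v')) * (\<Prod>e\<in>#E. X (\<phi> (fst e)) (\<phi> (snd e)))" for \<phi> :: "nat \<Rightarrow> nat"
  define P' where "P' \<phi> = (\<Prod>v'\<in>W'. N' v' X (\<phi> v')) * (\<Prod>e\<in>#E'. X (\<phi> (fst e)) (\<phi> (snd e)))" for \<phi> :: "nat \<Rightarrow> nat"
  have "node_labelled_hom n W E N a X i = (\<Sum>\<phi>\<in>PiE W (\<lambda>_. {..<n}). if \<phi> a = i then P \<phi> else 0)"
    unfolding node_labelled_hom_def P_def by (rule sum.inter_filter[OF finP(1)])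
  also have "\<dots> = (\<Sum>\<psi>\<in>PiE W' (\<lambda>_. {..<n}). \<Sum>k\<in>{..<n}. if (\<psi>(v := k)) a = i then P (\<psi>(v := k)) else 0)"
    unfolding W(1) by (rule sum_PiE_insert) (use W in auto)
  also have "\<dots> = (\<Sum>\<psi>\<in>PiE W' (\<lambda>_. {..<n}). if \<psi> a = i then P' \<psi> else 0)"
  proof (rule sum.cong[OF refl])
    fix \<psi> assume \<psi>: "\<psi> \<in> PiE W' (\<lambda>_. {..<n})"
    have "a \<noteq> v" using a by auto
    then show "(\<Sum>k\<in>{..<n}. if (\<psi>(v := k)) a = i then P (\<psi>(v := k)) else 0) = (if \<psi> a = i then P' \<psi> else 0)"
      using step[OF \<psi>[unfolded W'_def]] unfolding P_def P'_def W'_def W(1)[symmetric] by auto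
  qed
  also have "\<dots> = node_labelled_hom n W' E' N' a X i"
    unfolding node_labelled_hom_def P'_def by (rule sum.inter_filter[OF finP(2), symmetric])
  finally show ?thesis unfolding W'_def .
qed

lemma prod_insert_fun_upd:
  assumes "finite W'" "v \<notin> W'"
  shows "(\<Prod>v'\<in>insert v W'. N v' X ((\<psi>(v := k)) v')) = N v X k * (\<Prod>v'\<in>W'. N v' X (\<psi> v'))"
proof -
  have "(\<Prod>v'\<in>W'. N v' X ((\<psi>(v := k)) v')) = (\<Prod>v'\<in>W'. N v' X (\<psi> v'))"
    by (rule prod.cong) (use assms in auto)
  then show ?thesis using assms by simp
qed

lemma prod_label_update:
  assumes "finite W'" "u \<in> W'"
  shows "(\<Prod>v'\<in>W'. (N(u := (\<lambda>X x. N u X x * s X x))) v' X (\<psi> v')) = s X (\<psi> u) * (\<Prod>v'\<in>W'. N v' X (\<psi> v'))"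
proof -
  have "(\<Prod>v'\<in>W'. (N(u := (\<lambda>X x. N u X x * s X x))) v' X (\<psi> v')) =
        (N u X (\<psi> u) * s X (\<psi> u)) * (\<Prod>v'\<in>W' - {u}. N v' X (\<psi> v'))"
    using assms by (subst prod.remove[of _ u]) (auto intro!: prod.cong)
  also have "\<dots> = s X (\<psi> u) * (\<Prod>v'\<in>W'. N v' X (\<psi> v'))"
    using assms by (subst (2) prod.remove[of _ u]) (auto simp: mult_ac)
  finally show ?thesis .
qed

lemma node_labelled_hom_eliminate_isolated:
  assumes finW: "finite W" and v: "v \<in> W" and a: "a \<in> W - {v}"
    and noe: "\<forall>e\<in>#E. \<not> incident_pair v e"
  shows "node_labelled_hom n W E N a X i =
    node_labelled_hom n (W - {v}) E (N(a := (\<lambda>X x. N a X x * (\<Sum>k<n. N v X k)))) a X i"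
proof (rule node_labelled_hom_remove_vertex[OF finW v a])
  fix \<psi>
  have W: "W = insert v (W - {v})" "v \<notin> W - {v}" "finite (W - {v})" using v finW by auto
  have pe: "(\<Prod>e\<in>#E. X ((\<psi>(v := k)) (fst e)) ((\<psi>(v := k)) (snd e))) = (\<Prod>e\<in>#E. X (\<psi> (fst e)) (\<psi> (snd e)))" for k
    by (rule arg_cong[where f = prod_mset], rule image_mset_cong) (use noe in \<open>auto simp: incident_pair_def\<close>)
  have "(\<Sum>k<n. (\<Prod>v'\<in>W. N v' X ((\<psi>(v := k)) v')) * (\<Prod>e\<in>#E. X ((\<psi>(v := k)) (fst e)) ((\<psi>(v := k)) (snd e))))
      = (\<Sum>k<n. N v X k * (\<Prod>v'\<in>W - {v}. N v' X (\<psi> v')) * (\<Prod>e\<in>#E. X (\<psi> (fst e)) (\<psi> (snd e))))"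
    by (subst W(1), simp only: prod_insert_fun_upd[OF W(3) W(2)] pe)
  also have "\<dots> = (\<Sum>k<n. N v X k) * (\<Prod>v'\<in>W - {v}. N v' X (\<psi> v')) * (\<Prod>e\<in>#E. X (\<psi> (fst e)) (\<psi> (snd e)))"
    by (simp add: sum_distrib_right)
  also have "\<dots> = (\<Prod>v'\<in>W - {v}. (N(a := (\<lambda>X x. N a X x * (\<Sum>k<n. N v X k)))) v' X (\<psi> v')) * (\<Prod>e\<in>#E. X (\<psi> (fst e)) (\<psi> (snd e)))"
    using prod_label_update[OF W(3) a, of N "\<lambda>X x. \<Sum>k<n. N v X k" X \<psi>] by simp
  finally show "(\<Sum>k<n. (\<Prod>v'\<in>W. N v' X ((\<psi>(v := k)) v')) * (\<Prod>e\<in>#E. X ((\<psi>(v := k)) (fst e)) ((\<psi>(v := k)) (snd e))))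
      = (\<Prod>v'\<in>W - {v}. (N(a := (\<lambda>X x. N a X x * (\<Sum>k<n. N v X k)))) v' X (\<psi> v')) * (\<Prod>e\<in>#E. X (\<psi> (fst e)) (\<psi> (snd e)))" .
qed

text \<open>Parallel edges at a leaf collapse because the entries of a simple adjacency matrix are
  idempotent; symmetry makes the orientation irrelevant.\<close>

lemma prod_leaf_edges:
  assumes X: "X \<in> simple_adj n" and "\<psi> u < n" "k < n" "u \<noteq> v"
    and leaf: "\<forall>e\<in>#M. e = (v, u) \<or> e = (u, v)" and "M \<noteq> {#}"
  shows "(\<Prod>e\<in>#M. X ((\<psi>(v := k)) (fst e)) ((\<psi>(v := k)) (snd e))) = X (\<psi> u) k"
proof (rule prod_mset_const_01[OF \<open>M \<noteq> {#}\<close>])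
  have "X (\<psi> u) k = X k (\<psi> u)" "X (\<psi> u) k = 0 \<or> X (\<psi> u) k = 1"
    using X assms(2,3) unfolding simple_adj_def by auto
  then show "\<forall>e\<in>#M. X ((\<psi>(v := k)) (fst e)) ((\<psi>(v := k)) (snd e)) = X (\<psi> u) k"
    "X (\<psi> u) k = 0 \<or> X (\<psi> u) k = 1" using leaf assms(4) by auto
qed

lemma node_labelled_hom_eliminate_leaf:
  assumes finW: "finite W" and v: "v \<in> W" and a: "a \<in> W - {v}" and u: "u \<in> W - {v}"
    and X: "X \<in> simple_adj n"
    and ev: "\<forall>e\<in>#E. incident_pair v e \<longrightarrow> (e = (v, u) \<or> e = (u, v))" and ne: "filter_mset (incident_pair v) E \<noteq> {#}"
  shows "node_labelled_hom n W E N a X i = node_labelled_hom n (W - {v}) (filter_mset (\<lambda>e. \<not> incident_pair v e) E)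
             (N(u := (\<lambda>X x. N u X x * (\<Sum>k<n. X x k * N v X k)))) a X i"
proof (rule node_labelled_hom_remove_vertex[OF finW v a])
  fix \<psi> assume \<psi>: "\<psi> \<in> PiE (W - {v}) (\<lambda>_. {..<n})"
  have W: "W = insert v (W - {v})" "v \<notin> W - {v}" "finite (W - {v})" using v finW by auto
  have uv: "u \<noteq> v" using u by auto
  have \<psi>u: "\<psi> u < n" using \<psi> u by auto
  have split: "E = filter_mset (incident_pair v) E + filter_mset (\<lambda>e. \<not> incident_pair v e) E" by simp
  have pv: "(\<Prod>e\<in>#filter_mset (incident_pair v) E. X ((\<psi>(v := k)) (fst e)) ((\<psi>(v := k)) (snd e))) = X (\<psi> u) k"
    if "k < n" for k
    using prod_leaf_edges[of X n \<psi> u k v "filter_mset (incident_pair v) E", OF X \<psi>u that uv] ev ne by auto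
  have pr: "(\<Prod>e\<in>#filter_mset (\<lambda>e. \<not> incident_pair v e) E. X ((\<psi>(v := k)) (fst e)) ((\<psi>(v := k)) (snd e)))
      = (\<Prod>e\<in>#filter_mset (\<lambda>e. \<not> incident_pair v e) E. X (\<psi> (fst e)) (\<psi> (snd e)))" for k
    by (rule arg_cong[where f = prod_mset], rule image_mset_cong) (auto simp: incident_pair_def)
  have "(\<Sum>k<n. (\<Prod>v'\<in>W. N v' X ((\<psi>(v := k)) v')) * (\<Prod>e\<in>#E. X ((\<psi>(v := k)) (fst e)) ((\<psi>(v := k)) (snd e))))
      = (\<Sum>k<n. N v X k * (\<Prod>v'\<in>W - {v}. N v' X (\<psi> v')) * (X (\<psi> u) k *
           (\<Prod>e\<in>#filter_mset (\<lambda>e. \<not> incident_pair v e) E. X (\<psi> (fst e)) (\<psi> (snd e)))))"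
  proof (rule sum.cong[OF refl])
    fix k assume "k \<in> {..<n}"
    then have k: "k < n" by simp
    show "(\<Prod>v'\<in>W. N v' X ((\<psi>(v := k)) v')) * (\<Prod>e\<in>#E. X ((\<psi>(v := k)) (fst e)) ((\<psi>(v := k)) (snd e)))
      = N v X k * (\<Prod>v'\<in>W - {v}. N v' X (\<psi> v')) * (X (\<psi> u) k *
           (\<Prod>e\<in>#filter_mset (\<lambda>e. \<not> incident_pair v e) E. X (\<psi> (fst e)) (\<psi> (snd e))))"
      by (subst W(1), simp only: prod_insert_fun_upd[OF W(3) W(2)], subst split,
          simp only: image_mset_union prod_mset.union pv[OF k] pr)
  qed
  also have "\<dots> = (\<Sum>k<n. X (\<psi> u) k * N v X k) * (\<Prod>v'\<in>W - {v}. N v' X (\<psi> v')) *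
           (\<Prod>e\<in>#filter_mset (\<lambda>e. \<not> incident_pair v e) E. X (\<psi> (fst e)) (\<psi> (snd e)))"
    by (simp only: sum_distrib_right) (simp add: mult_ac)
  also have "\<dots> = (\<Prod>v'\<in>W - {v}. (N(u := (\<lambda>X x. N u X x * (\<Sum>k<n. X x k * N v X k)))) v' X (\<psi> v')) *
           (\<Prod>e\<in>#filter_mset (\<lambda>e. \<not> incident_pair v e) E. X (\<psi> (fst e)) (\<psi> (snd e)))"
    using prod_label_update[OF W(3) u, of N "\<lambda>X x. \<Sum>k<n. X x k * N v X k" X \<psi>] by simp
  finally show "(\<Sum>k<n. (\<Prod>v'\<in>W. N v' X ((\<psi>(v := k)) v')) * (\<Prod>e\<in>#E. X ((\<psi>(v := k)) (fst e)) ((\<psi>(v := k)) (snd e))))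
      = (\<Prod>v'\<in>W - {v}. (N(u := (\<lambda>X x. N u X x * (\<Sum>k<n. X x k * N v X k)))) v' X (\<psi> v')) *
           (\<Prod>e\<in>#filter_mset (\<lambda>e. \<not> incident_pair v e) E. X (\<psi> (fst e)) (\<psi> (snd e)))" .
qed

lemma node_labelled_hom_singleton:
  assumes "i < n"
  shows "node_labelled_hom n {a} {#} N a X i = N a X i"
proof -
  define \<phi>0 where "\<phi>0 z = (if z = a then i else undefined)" for z
  have "{\<phi>\<in>PiE {a} (\<lambda>_. {..<n}). \<phi> a = i} = {\<phi>0}"
  proof (intro equalityI subsetI)
    fix \<phi> assume "\<phi> \<in> {\<phi>\<in>PiE {a} (\<lambda>_. {..<n}). \<phi> a = i}"
    then show "\<phi> \<in> {\<phi>0}" unfolding \<phi>0_def by (auto simp: PiE_def extensional_def fun_eq_iff)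
  next
    fix \<phi> assume "\<phi> \<in> {\<phi>0}"
    then show "\<phi> \<in> {\<phi>\<in>PiE {a} (\<lambda>_. {..<n}). \<phi> a = i}"
      unfolding \<phi>0_def using assms by (auto simp: PiE_def extensional_def)
  qed
  then show ?thesis unfolding node_labelled_hom_def \<phi>0_def by simp
qed


lemma card_plain_edge_pairs_le: "card (plain_edge_pairs E) \<le> size E"
  unfolding plain_edge_pairs_def
  using card_image_le[of "set_mset E" "\<lambda>e. {fst e, snd e}"] card_set_mset_le_size[of E] by simp

lemma proper_plain_edge_pairs:
  "\<forall>e\<in>#E. fst e \<in> W \<and> snd e \<in> W \<Longrightarrow> \<forall>e\<in>#E. fst e \<noteq> snd e \<Longrightarrow> proper_pairs W (plain_edge_pairs E)"
  unfolding proper_pairs_def plain_edge_pairs_def by fastforce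

lemma exists_vertex_single_pair:
  assumes W: "finite W" "a \<in> W" and P: "proper_pairs W P" and card_P: "card P \<le> 2"
    and inner: "W - {a} \<noteq> {}"
  shows "\<exists>v\<in>W - {a}. card (pairs_at P v) \<le> 1"
proof (rule ccontr)
  assume "\<not> ?thesis"
  then have deg: "2 \<le> card (pairs_at P v)" if "v \<in> W - {a}" for v using that by force
  have finP: "finite P" using proper_pairs_finite[OF W(1) P] .
  obtain v where v: "v \<in> W - {a}" using inner by blast
  have "card {a} + 1 \<le> card (pairs_at P v)" using deg[OF v] by simp
  then obtain K where K: "K \<subseteq> W - {a} - {v}" "card K = 1" "\<forall>w\<in>K. {v, w} \<in> P"
    by (rule pairs_at_imp_neighbours[OF W(1) P finite.insertI[OF finite.emptyI]])
  obtain w where "K = {w}" using K(2) by (rule card_1_singletonE)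
  then have w: "w \<in> W - {a}" "v \<noteq> w" using K(1) by auto
  have "3 \<le> card (pairs_at P v \<union> pairs_at P w)"
    using card_pairs_at_Un[OF P finP w(2)] deg[OF v] deg[OF w(1)] by simp
  also have "\<dots> \<le> card P" by (intro card_mono[OF finP]) (auto simp: pairs_at_def)
  finally show False using card_P by simp
qed

lemma mpnn_eliminate_isolated:
  assumes fin: "finite W" and v: "v \<in> W - {a}" and a: "a \<in> W"
    and none: "\<forall>e\<in>#E. \<not> incident_pair v e"
    and Y: "ideal_mpnn n d Y" and labels: "\<forall>v\<in>W. mpnn_computes n Y d (N v)"
  obtains Y1 d1 N' where "mpnn_extends n Y d Y1 d1" "\<forall>v'\<in>W - {v}. mpnn_computes n Y1 d1 (N' v')"
    "\<And>X i. node_labelled_hom n W E N a X i = node_labelled_hom n (W - {v}) E N' a X i"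
proof -
  obtain Y1 d1 where Y1: "mpnn_extends n Y d Y1 d1" "mpnn_computes n Y1 d1 (\<lambda>X i. \<Sum>j<n. N v X j)"
    using mpnn_extend_total_sum[OF Y] labels v by blast
  obtain Y2 d2 where Y2: "mpnn_extends n Y1 d1 Y2 d2" "mpnn_computes n Y2 d2 (\<lambda>X i. N a X i * (\<Sum>j<n. N v X j))"
    using mpnn_extend_map2[OF mpnn_extends_ideal[OF Y1(1)] mpnn_extends_computes[OF Y1(1)] Y1(2), where F = "(*)"]
      labels a by blast
  define N' where "N' = N(a := (\<lambda>X x. N a X x * (\<Sum>k<n. N v X k)))"
  show ?thesis
  proof (rule that[OF mpnn_extends_trans[OF Y1(1) Y2(1)]])
    show "\<forall>v'\<in>W - {v}. mpnn_computes n Y2 d2 (N' v')"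
      using Y2(2) mpnn_extends_computes[OF mpnn_extends_trans[OF Y1(1) Y2(1)]] labels unfolding N'_def by auto
    show "node_labelled_hom n W E N a X i = node_labelled_hom n (W - {v}) E N' a X i" for X i
      unfolding N'_def using node_labelled_hom_eliminate_isolated[OF fin _ _ none] v a by auto
  qed
qed

lemma mpnn_eliminate_leaf:
  assumes fin: "finite W" and v: "v \<in> W - {a}" and a: "a \<in> W" and u: "u \<in> W - {v}"
    and leaf: "\<forall>e\<in>#E. incident_pair v e \<longrightarrow> e = (v, u) \<or> e = (u, v)"
    and some: "filter_mset (incident_pair v) E \<noteq> {#}"
    and Y: "ideal_mpnn n d Y" and labels: "\<forall>v\<in>W. mpnn_computes n Y d (N v)"
  obtains Y1 d1 N' where "mpnn_extends n Y d Y1 d1" "\<forall>v'\<in>W - {v}. mpnn_computes n Y1 d1 (N' v')"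
    "\<And>X i. X \<in> simple_adj n \<Longrightarrow> node_labelled_hom n W E N a X i =
       node_labelled_hom n (W - {v}) (filter_mset (\<lambda>e. \<not> incident_pair v e) E) N' a X i"
proof -
  obtain Y1 d1 where Y1: "mpnn_extends n Y d Y1 d1" "mpnn_computes n Y1 d1 (\<lambda>X i. \<Sum>j<n. X i j * N v X j)"
    using mpnn_extend_neighbour_sum[OF Y] labels v by blast
  obtain Y2 d2 where Y2: "mpnn_extends n Y1 d1 Y2 d2"
    "mpnn_computes n Y2 d2 (\<lambda>X i. N u X i * (\<Sum>j<n. X i j * N v X j))"
    using mpnn_extend_map2[OF mpnn_extends_ideal[OF Y1(1)] mpnn_extends_computes[OF Y1(1)] Y1(2), where F = "(*)"]
      labels u by blast
  define N' where "N' = N(u := (\<lambda>X x. N u X x * (\<Sum>k<n. X x k * N v X k)))"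
  show ?thesis
  proof (rule that[OF mpnn_extends_trans[OF Y1(1) Y2(1)]])
    show "\<forall>v'\<in>W - {v}. mpnn_computes n Y2 d2 (N' v')"
      using Y2(2) mpnn_extends_computes[OF mpnn_extends_trans[OF Y1(1) Y2(1)]] labels unfolding N'_def by auto
    show "node_labelled_hom n W E N a X i =
        node_labelled_hom n (W - {v}) (filter_mset (\<lambda>e. \<not> incident_pair v e) E) N' a X i"
      if "X \<in> simple_adj n" for X i
      unfolding N'_def using node_labelled_hom_eliminate_leaf[OF fin _ _ u that leaf some] v a by auto
  qed
qed

lemma single_pair_leaf:
  assumes ends: "\<forall>e\<in>#E. fst e \<in> W \<and> snd e \<in> W" and loopfree: "\<forall>e\<in>#E. fst e \<noteq> snd e"
    and single: "pairs_at (plain_edge_pairs E) v = {p}"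
  obtains u where "u \<in> W - {v}" "\<forall>e\<in>#E. incident_pair v e \<longrightarrow> e = (v, u) \<or> e = (u, v)"
    "filter_mset (incident_pair v) E \<noteq> {#}"
proof -
  have at_v: "{fst e, snd e} \<in> pairs_at (plain_edge_pairs E) v" if "e \<in># E" "incident_pair v e" for e
    using that unfolding pairs_at_def plain_edge_pairs_def incident_pair_def by auto
  have p: "p \<in> pairs_at (plain_edge_pairs E) v" using single by simp
  then obtain u where u: "p = {v, u}" "u \<noteq> v" "u \<in> W"
    by (rule proper_pairs_at[OF proper_plain_edge_pairs[OF ends loopfree]])
  have "\<forall>e\<in>#E. incident_pair v e \<longrightarrow> e = (v, u) \<or> e = (u, v)"
  proof (intro ballI impI)
    fix e assume e: "e \<in># E" "incident_pair v e"
    then have "{fst e, snd e} = {v, u}" using at_v[OF e] single u(1) by simp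
    then show "e = (v, u) \<or> e = (u, v)" by (cases e) (auto simp: doubleton_eq_iff)
  qed
  moreover obtain e0 where e0: "e0 \<in># E" "p = {fst e0, snd e0}"
    using p unfolding pairs_at_def plain_edge_pairs_def by auto
  then have "e0 \<in># filter_mset (incident_pair v) E"
    using u(1) unfolding incident_pair_def by (auto simp: doubleton_eq_iff)
  then have "filter_mset (incident_pair v) E \<noteq> {#}" by (metis empty_iff set_mset_empty)
  ultimately show ?thesis using u by (intro that[of u]) auto
qed

text \<open>With at most two edge pairs some non-output vertex is isolated or a leaf, and it is
  absorbed into the node label of its neighbour by one message-passing step.\<close>

lemma mpnn_eliminate_vertex:
  assumes fin: "finite W" and v: "v \<in> W - {a}" and a: "a \<in> W"
    and ends: "\<forall>e\<in>#E. fst e \<in> W \<and> snd e \<in> W" and loopfree: "\<forall>e\<in>#E. fst e \<noteq> snd e"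
    and few: "card (pairs_at (plain_edge_pairs E) v) \<le> 1"
    and Y: "ideal_mpnn n d Y" and labels: "\<forall>v\<in>W. mpnn_computes n Y d (N v)"
  obtains Y1 d1 N' E' where "mpnn_extends n Y d Y1 d1" "\<forall>v'\<in>W - {v}. mpnn_computes n Y1 d1 (N' v')"
    "\<forall>e\<in>#E'. fst e \<in> W - {v} \<and> snd e \<in> W - {v}" "\<forall>e\<in>#E'. fst e \<noteq> snd e"
    "card (plain_edge_pairs E') \<le> card (plain_edge_pairs E)"
    "\<And>X i. X \<in> simple_adj n \<Longrightarrow> node_labelled_hom n W E N a X i = node_labelled_hom n (W - {v}) E' N' a X i"
proof -
  have fin_at: "finite (pairs_at (plain_edge_pairs E) v)" unfolding pairs_at_def plain_edge_pairs_def by simp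
  show ?thesis
  proof (cases "card (pairs_at (plain_edge_pairs E) v) = 0")
    case True
    then have none: "\<forall>e\<in>#E. \<not> incident_pair v e"
      using fin_at unfolding pairs_at_def plain_edge_pairs_def incident_pair_def by auto
    then have "\<forall>e\<in>#E. fst e \<in> W - {v} \<and> snd e \<in> W - {v}"
      using ends unfolding incident_pair_def by auto
    moreover obtain Y1 d1 N' where "mpnn_extends n Y d Y1 d1" "\<forall>v'\<in>W - {v}. mpnn_computes n Y1 d1 (N' v')"
      "\<And>X i. node_labelled_hom n W E N a X i = node_labelled_hom n (W - {v}) E N' a X i"
      using mpnn_eliminate_isolated[OF fin v a none Y labels] by blast
    ultimately show ?thesis using loopfree by (intro that[of Y1 d1 N' E]) auto
  next
    case False
    then have "card (pairs_at (plain_edge_pairs E) v) = 1" using few by simp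
    then obtain p where "pairs_at (plain_edge_pairs E) v = {p}" by (rule card_1_singletonE)
    then obtain u where u: "u \<in> W - {v}" "\<forall>e\<in>#E. incident_pair v e \<longrightarrow> e = (v, u) \<or> e = (u, v)"
      "filter_mset (incident_pair v) E \<noteq> {#}"
      by (rule single_pair_leaf[OF ends loopfree])
    define E' where "E' = filter_mset (\<lambda>e. \<not> incident_pair v e) E"
    have "\<forall>e\<in>#E'. fst e \<in> W - {v} \<and> snd e \<in> W - {v}" "\<forall>e\<in>#E'. fst e \<noteq> snd e"
      using ends loopfree unfolding E'_def incident_pair_def by auto
    moreover have "card (plain_edge_pairs E') \<le> card (plain_edge_pairs E)"
      unfolding E'_def plain_edge_pairs_def by (intro card_mono) auto
    moreover obtain Y1 d1 N' where "mpnn_extends n Y d Y1 d1" "\<forall>v'\<in>W - {v}. mpnn_computes n Y1 d1 (N' v')"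
      "\<And>X i. X \<in> simple_adj n \<Longrightarrow> node_labelled_hom n W E N a X i = node_labelled_hom n (W - {v}) E' N' a X i"
      using mpnn_eliminate_leaf[OF fin v a u Y labels] unfolding E'_def by blast
    ultimately show ?thesis by (intro that[of Y1 d1 N' E']) auto
  qed
qed

lemma mpnn_computes_node_labelled_hom:
  assumes "finite W" "a \<in> W" "\<forall>e\<in>#E. fst e \<in> W \<and> snd e \<in> W" "\<forall>e\<in>#E. fst e \<noteq> snd e"
    "card (plain_edge_pairs E) \<le> 2" "ideal_mpnn n d Y" "\<forall>v\<in>W. mpnn_computes n Y d (N v)"
  shows "\<exists>Y' d'. mpnn_extends n Y d Y' d' \<and> mpnn_computes n Y' d' (node_labelled_hom n W E N a)"
  using assms
proof (induction W arbitrary: E N Y d rule: finite_remove_induct)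
  case empty then show ?case by simp
next
  case (remove W)
  show ?case
  proof (cases "W - {a} = {}")
    case True
    then have W: "W = {a}" using remove.prems by auto
    then have "E = {#}" using remove.prems(2,3) by (metis multiset_nonemptyE singletonD)
    then have "mpnn_computes n Y d (node_labelled_hom n W E N a)"
      using remove.prems(6) W node_labelled_hom_singleton by (auto intro: mpnn_computes_cong)
    then show ?thesis using mpnn_extends_refl[OF remove.prems(5)] by blast
  next
    case False
    obtain v where v: "v \<in> W - {a}" "card (pairs_at (plain_edge_pairs E) v) \<le> 1"
      using exists_vertex_single_pair[OF remove.hyps(1) remove.prems(1)
          proper_plain_edge_pairs[OF remove.prems(2,3)] remove.prems(4) False] by blast
    obtain Y1 d1 N' E' where Y1: "mpnn_extends n Y d Y1 d1" "\<forall>v'\<in>W - {v}. mpnn_computes n Y1 d1 (N' v')"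
      "\<forall>e\<in>#E'. fst e \<in> W - {v} \<and> snd e \<in> W - {v}" "\<forall>e\<in>#E'. fst e \<noteq> snd e"
      "card (plain_edge_pairs E') \<le> card (plain_edge_pairs E)"
      "\<And>X i. X \<in> simple_adj n \<Longrightarrow> node_labelled_hom n W E N a X i = node_labelled_hom n (W - {v}) E' N' a X i"
      using mpnn_eliminate_vertex[OF remove.hyps(1) v(1) remove.prems(1-3) v(2) remove.prems(5,6)] by blast
    have "\<exists>Y' d'. mpnn_extends n Y1 d1 Y' d' \<and> mpnn_computes n Y' d' (node_labelled_hom n (W - {v}) E' N' a)"
      by (rule remove.IH) (use v remove.prems Y1(2-5) mpnn_extends_ideal[OF Y1(1)] in auto)
    then obtain Y2 d2 where Y2: "mpnn_extends n Y1 d1 Y2 d2"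
      "mpnn_computes n Y2 d2 (node_labelled_hom n (W - {v}) E' N' a)" by blast
    from Y2(2) have "mpnn_computes n Y2 d2 (node_labelled_hom n W E N a)"
      by (rule mpnn_computes_cong) (simp add: Y1(6))
    then show ?thesis using mpnn_extends_trans[OF Y1(1) Y2(1)] by blast
  qed
qed

lemma mpnn_realise:
  assumes "continuous_on UNIV \<sigma>" "non_polynomial \<sigma>" "ideal_mpnn n d Y" "mpnn_computes n Y d g"
  shows "\<exists>F. mpnn \<sigma> n F \<and> (\<forall>X\<in>simple_adj n. \<forall>i<n. F X i = g X i)"
proof -
  obtain c where c: "c < d" "\<forall>X\<in>simple_adj n. \<forall>i<n. Y X i c = g X i"
    using assms(4) unfolding mpnn_computes_def by blast
  obtain Y' where "mpnn_layers \<sigma> n d Y'" "\<forall>X\<in>simple_adj n. \<forall>i<n. \<forall>c<d. Y' X i c = Y X i c"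
    using ideal_mpnn_realisable[OF assms(1-3)] by blast
  with c show ?thesis unfolding mpnn_def by (intro exI[of _ "\<lambda>X i. Y' X i c"]) auto
qed

lemma hom_poly_loop:
  assumes "e \<in># E" "fst e = snd e" "X \<in> simple_adj n"
  shows "hom_poly n m E a a X i i = 0"
proof -
  have zero: "prod_mset (image_mset (\<lambda>e. X (\<phi> (fst e)) (\<phi> (snd e))) E) = 0" for \<phi>
  proof -
    have "X (\<phi> (fst e)) (\<phi> (snd e)) = 0" using assms(2,3) unfolding simple_adj_def by simp
    then have "0 \<in># image_mset (\<lambda>e. X (\<phi> (fst e)) (\<phi> (snd e))) E"
      unfolding in_image_mset using assms(1) by (intro image_eqI[of _ _ e]) auto
    then show ?thesis by (simp only: prod_mset_zero_iff)
  qed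
  show ?thesis unfolding hom_poly_def by (simp add: zero)
qed

lemma mpnn_hom_poly:
  assumes "continuous_on UNIV \<sigma>" "non_polynomial \<sigma>"
    and H: "is_multigraph_output m E a a" and size: "size E \<le> 2"
  shows "\<exists>F. mpnn \<sigma> n F \<and> (\<forall>X\<in>simple_adj n. \<forall>i<n. F X i = hom_poly n m E a a X i i)"
proof -
  define Y0 where "Y0 = (\<lambda>(X::nat\<Rightarrow>nat\<Rightarrow>real) (i::nat) (c::nat). if c = 0 then (1::real) else 0)"
  have Y0: "ideal_mpnn n 1 Y0" unfolding Y0_def by (rule ideal_mpnn_init)
  show ?thesis
  proof (cases "\<exists>e\<in>#E. fst e = snd e")
    case True
    obtain Y1 d1 where "mpnn_extends n Y0 1 Y1 d1" "mpnn_computes n Y1 d1 (\<lambda>X i. 0)"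
      using mpnn_extend_const[OF Y0] by blast
    moreover have "mpnn_computes n Y1 d1 (\<lambda>X i. hom_poly n m E a a X i i)"
      using calculation(2) True hom_poly_loop by (auto elim!: mpnn_computes_cong)
    ultimately show ?thesis using mpnn_realise[OF assms(1,2) mpnn_extends_ideal] by blast
  next
    case False
    have labels: "\<forall>v\<in>{..<m}. mpnn_computes n Y0 1 (\<lambda>X x. 1)" unfolding mpnn_computes_def Y0_def by auto
    have ends: "a \<in> {..<m}" "\<forall>e\<in>#E. fst e \<in> {..<m} \<and> snd e \<in> {..<m}"
      using H unfolding is_multigraph_output_def by auto
    have "\<forall>e\<in>#E. fst e \<noteq> snd e" using False by auto
    moreover have "card (plain_edge_pairs E) \<le> 2" using card_plain_edge_pairs_le[of E] size by linarith
    ultimately obtain Y' d' where Y': "mpnn_extends n Y0 1 Y' d'"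
      "mpnn_computes n Y' d' (node_labelled_hom n {..<m} E (\<lambda>v X x. 1) a)"
      using mpnn_computes_node_labelled_hom[OF finite_lessThan ends _ _ Y0, where N = "\<lambda>v X x. 1"] labels
      by blast
    have "node_labelled_hom n {..<m} E (\<lambda>v X x. 1) a X i = hom_poly n m E a a X i i" for X i
      unfolding node_labelled_hom_def hom_poly_def by simp
    then show ?thesis using mpnn_realise[OF assms(1,2) mpnn_extends_ideal[OF Y'(1)] Y'(2)] by simp
  qed
qed

theorem theorem3:
  fixes n :: nat and \<sigma> :: "real \<Rightarrow> real"
  assumes "n \<ge> 1" and "continuous_on UNIV \<sigma>" and "non_polynomial \<sigma>"
  shows "(\<forall>m E a b \<epsilon>. is_multigraph_output m E a b \<and> a \<noteq> b \<and> size E \<le> 4 \<and> \<epsilon> > 0 \<longrightarrow>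
            (\<exists>F. ppgn \<sigma> n F \<and> (\<forall>X \<in> simple_adj n. \<forall>i<n. \<forall>j<n.
                 \<bar>F X i j - hom_poly n m E a b X i j\<bar> < \<epsilon>)))
       \<and> (\<forall>m E a b \<epsilon>. is_multigraph_output m E a b \<and> a = b \<and> size E \<le> 5 \<and> \<epsilon> > 0 \<longrightarrow>
            (\<exists>F. ppgn \<sigma> n F \<and> (\<forall>X \<in> simple_adj n. \<forall>i<n.
                 \<bar>F X i i - hom_poly n m E a b X i i\<bar> < \<epsilon>)))
       \<and> (\<forall>m E a b \<epsilon>. is_multigraph_output m E a b \<and> a = b \<and> size E \<le> 2 \<and> \<epsilon> > 0 \<longrightarrow>
            (\<exists>F. mpnn \<sigma> n F \<and> (\<forall>X \<in> simple_adj n. \<forall>i<n.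
                 \<bar>F X i - hom_poly n m E a b X i i\<bar> < \<epsilon>)))"
proof (intro conjI allI impI)
  fix m E a b and \<epsilon> :: real
  assume H: "is_multigraph_output m E a b \<and> a \<noteq> b \<and> size E \<le> 4 \<and> \<epsilon> > 0"
  then obtain F where "ppgn \<sigma> n F" "\<forall>X\<in>simple_adj n. \<forall>i<n. \<forall>j<n. F X i j = hom_poly n m E a b X i j"
    using ppgn_hom_poly[OF assms(2,3), of m E a b n] by auto
  with H show "\<exists>F. ppgn \<sigma> n F \<and> (\<forall>X \<in> simple_adj n. \<forall>i<n. \<forall>j<n. \<bar>F X i j - hom_poly n m E a b X i j\<bar> < \<epsilon>)"
    by auto
next
  fix m E a b and \<epsilon> :: real
  assume H: "is_multigraph_output m E a b \<and> a = b \<and> size E \<le> 5 \<and> \<epsilon> > 0"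
  then obtain F where "ppgn \<sigma> n F" "\<forall>X\<in>simple_adj n. \<forall>i<n. F X i i = hom_poly n m E a b X i i"
    using ppgn_hom_poly[OF assms(2,3), of m E a b n] by auto
  with H show "\<exists>F. ppgn \<sigma> n F \<and> (\<forall>X \<in> simple_adj n. \<forall>i<n. \<bar>F X i i - hom_poly n m E a b X i i\<bar> < \<epsilon>)"
    by auto
next
  fix m E a b and \<epsilon> :: real
  assume H: "is_multigraph_output m E a b \<and> a = b \<and> size E \<le> 2 \<and> \<epsilon> > 0"
  then obtain F where "mpnn \<sigma> n F" "\<forall>X\<in>simple_adj n. \<forall>i<n. F X i = hom_poly n m E a a X i i"
    using mpnn_hom_poly[OF assms(2,3), of m E a n] by auto
  with H show "\<exists>F. mpnn \<sigma> n F \<and> (\<forall>X \<in> simple_adj n. \<forall>i<n. \<bar>F X i - hom_poly n m E a b X i i\<bar> < \<epsilon>)"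
    by auto
qed

end
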